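(* Let $\rho_{AB}\in M_2(\mathbb{C})\otimes M_d(\mathbb{C})$ be a bipartite state with $\mathrm{rank}(\rho_{AB})=2$. Let $\{P_{a|0}\}_{a=0}^1$ and $\{P_{a|1}\}_{a=0}^1$ be two nontrivial projective measurements on subsystem $A$ which are different up to relabeling, and set $\rho_{a|x}=\mathrm{Tr}_A\big((P_{a|x}\otimes\mathbb{1})\rho_{AB}\big)$. Then: (i) if one of the four operators $\rho_{a|x}$ is zero, then the other three have rank two and are pairwise proportional; (ii) if $x_1\ne x_2$ and $\rho_{0|x_1},\rho_{1|x_1}$ both have rank one, then either $\rho_{0|x_2}$ and $\rho_{1|x_2}$ both have rank two, or all four $\rho_{a|x}$ have rank one and are pairwise proportional.
   Context: A nontrivial projective measurement on $\mathbb{C}^2$ is a pair $\{P_0,P_1\}$ of rank-one orthogonal projections with $P_0+P_1=\mathbb{1}$. Two such measurements $\{P_{a|0}\}_{a=0}^1,\{P_{a|1}\}_{a=0}^1$ are "different up to relabeling" if $P_{0|0}\ne P_{0|1}$ and $P_{0|0}\ne P_{1|1}$. *)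

theory Defs
  imports "Jordan_Normal_Form.Matrix" "Jordan_Normal_Form.VS_Connect" "Jordan_Normal_Form.DL_Rank"
    "Jordan_Normal_Form.Schur_Decomposition"
begin

(* Conventions: C^2 (x) C^d is identified with C^(2*d) via the basis index
   (a,b) |-> a*d + b, a < 2, b < d (standard Kronecker ordering). *)

definition mrank :: "complex mat \<Rightarrow> nat" where
  "mrank A = vec_space.rank (dim_row A) A"

definition mtrace :: "complex mat \<Rightarrow> complex" where
  "mtrace A = (\<Sum>i<dim_row A. A $$ (i,i))"

definition psd :: "nat \<Rightarrow> complex mat \<Rightarrow> bool" where
  "psd n A \<longleftrightarrow> A \<in> carrier_mat n n \<and> mat_adjoint A = A \<and>
     (\<forall>v \<in> carrier_vec n. cscalar_prod (A *\<^sub>v v) v \<in> \<real> \<and> 0 \<le> Re (cscalar_prod (A *\<^sub>v v) v))"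

definition is_state :: "nat \<Rightarrow> complex mat \<Rightarrow> bool" where
  "is_state n \<rho> \<longleftrightarrow> psd n \<rho> \<and> mtrace \<rho> = 1"

definition rank_one_proj2 :: "complex mat \<Rightarrow> bool" where
  "rank_one_proj2 P \<longleftrightarrow> P \<in> carrier_mat 2 2 \<and> P * P = P \<and> mat_adjoint P = P \<and> mrank P = 1"

definition nontriv_pm :: "complex mat \<Rightarrow> complex mat \<Rightarrow> bool" where
  "nontriv_pm P0 P1 \<longleftrightarrow> rank_one_proj2 P0 \<and> rank_one_proj2 P1 \<and> P0 + P1 = 1\<^sub>m 2"

(* P (x) 1_d for a 2x2 matrix P *)
definition tensor_id :: "nat \<Rightarrow> complex mat \<Rightarrow> complex mat" where
  "tensor_id d P = mat (2*d) (2*d)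
     (\<lambda>(i,j). if i mod d = j mod d then P $$ (i div d, j div d) else 0)"

definition ptrace_A :: "nat \<Rightarrow> complex mat \<Rightarrow> complex mat" where
  "ptrace_A d X = mat d d (\<lambda>(b,b'). \<Sum>a<2. X $$ (a*d + b, a*d + b'))"

definition assem :: "nat \<Rightarrow> complex mat \<Rightarrow> complex mat \<Rightarrow> complex mat" where
  "assem d \<rho> P = ptrace_A d (tensor_id d P * \<rho>)"

definition proportional :: "complex mat \<Rightarrow> complex mat \<Rightarrow> bool" where
  "proportional X Y \<longleftrightarrow> (\<exists>c::complex. c \<noteq> 0 \<and> X = c \<cdot>\<^sub>m Y)"

end

theory Submission
  imports Defs
begin

text \<open>
  Write \<open>P = |e\<rangle>\<langle>e|\<close> for a unit vector \<open>e \<in> \<complex>\<^sup>2\<close> with orthogonal complement \<open>e\<^sup>\<bottom>\<close>. Then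
  \<open>Tr\<^sub>A((P \<otimes> \<one>) \<rho>) = (e \<otimes> \<one>)\<^sup>* \<rho> (e \<otimes> \<one>)\<close> is the \<open>(e, e)\<close> block of \<open>\<rho>\<close> for the
  splitting \<open>\<complex>\<^sup>2 \<otimes> \<complex>\<^sup>d = (e \<otimes> \<complex>\<^sup>d) \<oplus> (e\<^sup>\<bottom> \<otimes> \<complex>\<^sup>d)\<close>, and the block at
  \<open>f = \<alpha> e + \<beta> e\<^sup>\<bottom>\<close> is the corresponding combination of the four blocks.

  If the \<open>(e, e)\<close> block vanishes, positivity kills both off-diagonal blocks, so \<open>\<rho>\<close> lives on the
  \<open>(e\<^sup>\<bottom>, e\<^sup>\<bottom>)\<close> block, which therefore has rank 2, and every other block is \<open>|\<beta>|\<^sup>2\<close> times it.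

  If both diagonal blocks have rank one, \<open>A A\<^sup>*\<close> and \<open>B B\<^sup>*\<close>, positivity forces the off-diagonal
  block to be \<open>c A B\<^sup>*\<close>, and \<open>|c| \<noteq> 1\<close> since otherwise \<open>\<rho>\<close> would have rank one. The block at
  \<open>f\<close> is then \<open>[A B] K [A B]\<^sup>*\<close> with \<open>det K = |\<alpha>|\<^sup>2 |\<beta>|\<^sup>2 (1 - |c|\<^sup>2)\<close>: it has rank 2 when
  \<open>\<alpha> \<beta> \<noteq> 0\<close> and \<open>A, B\<close> are independent, and it is a multiple of \<open>A A\<^sup>*\<close> when they are
  parallel. Two measurements that differ up to relabelling consist of four distinct projections,
  which supplies \<open>\<alpha> \<beta> \<noteq> 0\<close> where it is needed.
\<close>

text \<open>The library versions of these laws take carrier hypotheses, which the simplifier cannot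
  establish for compound products; equations between dimensions it can.\<close>

lemma assoc_mult_mat_dim:
  "dim_col A = dim_row B \<Longrightarrow> dim_col B = dim_row C \<Longrightarrow> A * B * C = A * (B * (C :: 'a :: comm_ring mat))"
  by (rule assoc_mult_mat[of A "dim_row A" "dim_col A" B "dim_col B" C "dim_col C"]) auto

lemma add_mult_distrib_mat_dim:
  "dim_row A = dim_row B \<Longrightarrow> dim_col A = dim_col B \<Longrightarrow> dim_col A = dim_row C \<Longrightarrow>
    (A + B) * C = A * C + B * (C :: 'a :: comm_ring mat)"
  by (rule add_mult_distrib_mat[of A "dim_row A" "dim_col A"]) auto

lemma mult_add_distrib_mat_dim:
  "dim_row B = dim_row C \<Longrightarrow> dim_col B = dim_col C \<Longrightarrow> dim_col A = dim_row B \<Longrightarrow>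
    A * (B + C) = A * B + A * (C :: 'a :: comm_ring mat)"
  by (rule mult_add_distrib_mat[of A "dim_row A" "dim_col A"]) auto

lemma mult_minus_distrib_mat_dim:
  "dim_row B = dim_row C \<Longrightarrow> dim_col B = dim_col C \<Longrightarrow> dim_col A = dim_row B \<Longrightarrow>
    A * (B - C) = A * B - A * (C :: 'a :: comm_ring mat)"
  by (rule mult_minus_distrib_mat[of A "dim_row A" "dim_col A"]) auto

lemma mult_smult_distrib_dim:
  "dim_col A = dim_row B \<Longrightarrow> A * (c \<cdot>\<^sub>m B) = c \<cdot>\<^sub>m (A * (B :: 'a :: comm_ring mat))"
  by (rule mult_smult_distrib[of A "dim_row A" "dim_col A"]) auto

lemma mult_smult_assoc_mat_dim:
  "dim_col A = dim_row B \<Longrightarrow> (c \<cdot>\<^sub>m A) * B = c \<cdot>\<^sub>m (A * (B :: 'a :: comm_ring mat))"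
  by (rule mult_smult_assoc_mat[of A "dim_row A" "dim_col A"]) auto

lemma add_smult_distrib_left_mat_dim:
  "dim_row A = dim_row B \<Longrightarrow> dim_col A = dim_col B \<Longrightarrow> k \<cdot>\<^sub>m (A + B) = k \<cdot>\<^sub>m A + k \<cdot>\<^sub>m (B :: 'a :: semiring mat)"
  by (rule add_smult_distrib_left_mat[of A "dim_row A" "dim_col A"]) auto

lemma left_add_zero_mat_dim: "dim_row A = n \<Longrightarrow> dim_col A = m \<Longrightarrow> 0\<^sub>m n m + A = (A :: 'a :: monoid_add mat)"
  by (rule left_add_zero_mat) auto

lemma left_mult_one_mat_dim: "dim_row A = n \<Longrightarrow> 1\<^sub>m n * A = (A :: 'a :: comm_ring_1 mat)"
  by (rule left_mult_one_mat) auto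

lemmas mat_dim_simps = assoc_mult_mat_dim add_mult_distrib_mat_dim mult_add_distrib_mat_dim
  mult_minus_distrib_mat_dim mult_smult_distrib_dim mult_smult_assoc_mat_dim
  add_smult_distrib_left_mat_dim left_add_zero_mat_dim left_mult_one_mat_dim

lemma smult_smult_mat: "a \<cdot>\<^sub>m (b \<cdot>\<^sub>m A) = (a * b :: 'a :: semigroup_mult) \<cdot>\<^sub>m A"
  by (rule eq_matI) (auto simp: mult.assoc)

lemma one_smult_mat [simp]: "(1 :: 'a :: monoid_mult) \<cdot>\<^sub>m A = A"
  by (rule eq_matI) auto

lemma eq_of_minus_eq_0_mat:
  "A \<in> carrier_mat n m \<Longrightarrow> B \<in> carrier_mat n m \<Longrightarrow> A - B = 0\<^sub>m n m \<Longrightarrow> A = (B :: 'a :: ab_group_add mat)"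
  by (rule eq_matI) (metis carrier_matD index_minus_mat(1) index_zero_mat(1) eq_iff_diff_eq_0, auto)

lemma dim_mat_adjoint [simp]:
  "dim_row (mat_adjoint A) = dim_col A" "dim_col (mat_adjoint A) = dim_row A"
  unfolding mat_adjoint_def by (auto simp: mat_of_rows_def)

lemma index_mat_adjoint [simp]:
  "i < dim_col A \<Longrightarrow> j < dim_row A \<Longrightarrow> mat_adjoint A $$ (i, j) = cnj (A $$ (j, i))"
  unfolding mat_adjoint_def by (auto simp: mat_of_rows_def)

lemma mat_adjoint_carrier [simp, intro]:
  "A \<in> carrier_mat n m \<Longrightarrow> mat_adjoint A \<in> carrier_mat m n"
  by (metis dim_mat_adjoint carrier_matD carrier_matI)

lemma mat_adjoint_adjoint [simp]: "mat_adjoint (mat_adjoint (A :: complex mat)) = A"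
  by (rule eq_matI) auto

lemma mat_adjoint_mult:
  "dim_col A = dim_row B \<Longrightarrow> mat_adjoint (A * B) = mat_adjoint B * mat_adjoint (A :: complex mat)"
  by (rule eq_matI) (auto simp: scalar_prod_def mult.commute)

lemma mat_adjoint_add:
  "dim_row A = dim_row B \<Longrightarrow> dim_col A = dim_col B \<Longrightarrow>
    mat_adjoint (A + B) = mat_adjoint A + mat_adjoint (B :: complex mat)"
  by (rule eq_matI) auto

lemma mat_adjoint_zero [simp]: "mat_adjoint (0\<^sub>m n m :: complex mat) = 0\<^sub>m m n"
  by (rule eq_matI) auto

lemma mat_adjoint_smult: "mat_adjoint (c \<cdot>\<^sub>m A) = cnj c \<cdot>\<^sub>m mat_adjoint (A :: complex mat)"
  by (rule eq_matI) auto

lemma row_mat_adjoint: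
  "i < dim_col A \<Longrightarrow> row (mat_adjoint A) i = conjugate (col (A :: complex mat) i)"
  by (rule eq_vecI) auto

lemma hermitian_index:
  assumes "mat_adjoint A = A" "A \<in> carrier_mat n n" "i < n" "j < n"
  shows "A $$ (i, j) = cnj (A $$ (j, i))"
  using assms index_mat_adjoint[of i A j] by (metis carrier_matD)

lemma cscalar_prod_mat_adjoint:
  assumes A: "A \<in> carrier_mat n m" and x: "x \<in> carrier_vec m" and y: "y \<in> carrier_vec n"
  shows "(A *\<^sub>v x) \<bullet>c y = x \<bullet>c (mat_adjoint A *\<^sub>v (y :: complex vec))"
proof -
  have "(A *\<^sub>v x) \<bullet>c y = (\<Sum>i<n. (\<Sum>j<m. A $$ (i, j) * x $ j) * cnj (y $ i))"
    using A x y by (simp add: scalar_prod_def atLeast0LessThan row_def)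
  also have "\<dots> = (\<Sum>i<n. \<Sum>j<m. x $ j * (A $$ (i, j) * cnj (y $ i)))"
    by (simp add: sum_distrib_right sum_distrib_left mult_ac)
  also have "\<dots> = (\<Sum>j<m. \<Sum>i<n. x $ j * (A $$ (i, j) * cnj (y $ i)))"
    by (rule sum.swap)
  also have "\<dots> = x \<bullet>c (mat_adjoint A *\<^sub>v y)"
    using A x y by (simp add: scalar_prod_def atLeast0LessThan row_def sum_distrib_left)
  finally show ?thesis .
qed

section \<open>Rank\<close>

context vec_space
begin

lemma span_cols_mult_subset:
  assumes U: "U \<in> carrier_mat n k" and Y: "Y \<in> carrier_mat k m"
  shows "span (set (cols (U * Y))) \<subseteq> span (set (cols U))"
proof
  fix y assume "y \<in> span (set (cols (U * Y)))"
  then obtain x where x: "x \<in> carrier_vec m" "y = (U * Y) *\<^sub>v x"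
    using col_space_eq[of "U * Y" m] U Y unfolding col_space_def by auto
  have "y = U *\<^sub>v (Y *\<^sub>v x)" using x U Y by (simp add: assoc_mult_mat_vec)
  moreover have "Y *\<^sub>v x \<in> carrier_vec k" using Y x by auto
  ultimately show "y \<in> span (set (cols U))"
    using col_space_eq[of U k] U unfolding col_space_def by auto
qed

lemma rank_le_of_span_cols_subset:
  assumes A: "A \<in> carrier_mat n nc" and B: "B \<in> carrier_mat n nc'"
    and sub: "span (set (cols A)) \<subseteq> span (set (cols B))"
  shows "rank A \<le> rank B"
proof -
  define W where "W = span (set (cols B))"
  have cB: "set (cols B) \<subseteq> carrier_vec n" and cA: "set (cols A) \<subseteq> carrier_vec n"
    using A B cols_dim carrier_matD(1) by blast+
  have vsW: "vectorspace class_ring (vs W)"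
    unfolding W_def using span_is_subspace[THEN subspace_is_vs, OF cB] by auto
  have smW: "submodule class_ring W V" unfolding W_def by (simp add: span_is_submodule cB)
  have AW: "set (cols A) \<subseteq> W" using sub in_own_span[OF cA] unfolding W_def by auto
  have subs: "VectorSpace.subspace class_ring (span (set (cols A))) (vs W)"
    using vectorspace.span_is_subspace[OF vsW, of "set (cols A)",
        unfolded span_li_not_depend(1)[OF AW smW]] AW by auto
  have "vectorspace.fin_dim class_ring (vs W)"
    "vectorspace.fin_dim class_ring (vs W\<lparr>carrier := span (set (cols A))\<rparr>)"
    using fin_dim_span_cols A B unfolding W_def by auto
  then show ?thesis unfolding rank_def W_def[symmetric]
    using vectorspace.subspace_dim[OF vsW subs] by simp
qed

lemma rank_mult_le_inner_dim:
  assumes U: "U \<in> carrier_mat n k" and Y: "Y \<in> carrier_mat k m"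
  shows "rank (U * Y) \<le> k"
proof -
  have "rank (U * Y) \<le> rank U"
    by (rule rank_le_of_span_cols_subset[OF _ U span_cols_mult_subset[OF U Y]]) (use U Y in auto)
  also have "\<dots> \<le> k" using rank_le_nc[OF U] .
  finally show ?thesis .
qed

lemma factor_through_span_cols:
  assumes A: "A \<in> carrier_mat n nc" and ws: "set ws \<subseteq> carrier_vec n"
    and span: "\<And>j. j < nc \<Longrightarrow> col A j \<in> span (set ws)"
  shows "\<exists>Y. Y \<in> carrier_mat (length ws) nc \<and> A = mat_of_cols n ws * Y"
proof -
  define W where "W = mat_of_cols n ws"
  have "\<exists>c. col A j = W *\<^sub>v vec (length ws) c" if j: "j < nc" for j
  proof -
    obtain c where c: "col A j = lincomb_list c ws"
      using span[OF j] span_list_as_span[OF ws] unfolding span_list_def by auto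
    have "\<forall>w\<in>set ws. dim_vec w = n" using ws by auto
    then show ?thesis unfolding W_def using lincomb_list_as_mat_mult[of ws c] c by auto
  qed
  then obtain x where x: "\<And>j. j < nc \<Longrightarrow> col A j = W *\<^sub>v vec (length ws) (x j)" by metis
  define Y where "Y = mat (length ws) nc (\<lambda>(l, j). x j l)"
  have "A = W * Y"
  proof (rule eq_matI)
    fix i j assume "i < dim_row (W * Y)" "j < dim_col (W * Y)"
    then have ij: "i < n" "j < nc" unfolding W_def Y_def by auto
    have "A $$ (i, j) = (W *\<^sub>v vec (length ws) (x j)) $ i"
      using A ij x[OF ij(2)] by (metis carrier_matD index_col)
    also have "\<dots> = (\<Sum>l<length ws. W $$ (i, l) * x j l)"
      unfolding W_def using ij
      by (simp add: mult_mat_vec_def scalar_prod_def row_def atLeast0LessThan mat_of_cols_def)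
    also have "\<dots> = (W * Y) $$ (i, j)"
      using ij unfolding W_def Y_def by (simp add: scalar_prod_def atLeast0LessThan mat_of_cols_def)
    finally show "A $$ (i, j) = (W * Y) $$ (i, j)" .
  qed (use A in \<open>auto simp: W_def Y_def\<close>)
  moreover have "Y \<in> carrier_mat (length ws) nc" unfolding Y_def by simp
  ultimately show ?thesis unfolding W_def by blast
qed

lemma rank_factorization:
  assumes A: "A \<in> carrier_mat n nc"
  shows "\<exists>W Y. W \<in> carrier_mat n (rank A) \<and> Y \<in> carrier_mat (rank A) nc \<and> A = W * Y"
proof -
  obtain S where S: "maximal S (\<lambda>T. T \<subseteq> set (cols A) \<and> lin_indpt T)"
    using maximal_exists[of "\<lambda>T. T \<subseteq> set (cols A) \<and> lin_indpt T" "card (set (cols A))" "{}"]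
    by (meson List.finite_set card_mono empty_iff empty_subsetI finite_lin_indpt2 rev_finite_subset)
  have SA: "S \<subseteq> set (cols A)" and li: "lin_indpt S" using S unfolding maximal_def by auto
  have cA: "set (cols A) \<subseteq> carrier_vec n" using A cols_dim carrier_matD(1) by blast
  have Sc: "S \<subseteq> carrier_vec n" using SA cA by auto
  have "finite S" using SA finite_subset by blast
  then obtain ws where ws: "set ws = S" "distinct ws" using finite_distinct_list by auto
  have len: "length ws = rank A" using ws distinct_card rank_card_indpt[OF A S] by fastforce
  have "col A j \<in> span S" if "j < nc" for j
  proof (cases "col A j \<in> S")
    case True then show ?thesis using in_own_span[OF Sc] by auto
  next
    case False
    have inA: "col A j \<in> set (cols A)" using A that by (simp add: cols_def)
    have "\<not> lin_indpt (insert (col A j) S)"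
    proof
      assume "lin_indpt (insert (col A j) S)"
      then have "insert (col A j) S = S" using S inA SA unfolding maximal_def by blast
      then show False using False by auto
    qed
    then show ?thesis using lin_dep_iff_in_span[of S "col A j"] Sc li inA cA False by auto
  qed
  then obtain Y where "Y \<in> carrier_mat (length ws) nc" "A = mat_of_cols n ws * Y"
    using factor_through_span_cols[OF A, of ws] ws Sc by auto
  moreover have "mat_of_cols n ws \<in> carrier_mat n (length ws)" by simp
  ultimately show ?thesis unfolding len by blast
qed

end

lemma mult_pad_inner_dim:
  fixes W :: "'a :: comm_ring mat"
  assumes W: "W \<in> carrier_mat n r" and Y: "Y \<in> carrier_mat r m" and r: "r \<le> k"
  shows "\<exists>U Z. U \<in> carrier_mat n k \<and> Z \<in> carrier_mat k m \<and> W * Y = U * Z"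
proof (intro exI conjI)
  define U where "U = mat n k (\<lambda>(i, l). if l < r then W $$ (i, l) else 0)"
  define Z where "Z = mat k m (\<lambda>(l, j). if l < r then Y $$ (l, j) else 0)"
  show "U \<in> carrier_mat n k" "Z \<in> carrier_mat k m" unfolding U_def Z_def by auto
  show "W * Y = U * Z"
  proof (rule eq_matI)
    fix i j assume "i < dim_row (U * Z)" "j < dim_col (U * Z)"
    then have ij: "i < n" "j < m" unfolding U_def Z_def by auto
    have "(U * Z) $$ (i, j) = (\<Sum>l<k. U $$ (i, l) * Z $$ (l, j))"
      using ij unfolding U_def Z_def by (simp add: scalar_prod_def atLeast0LessThan)
    also have "\<dots> = (\<Sum>l<r. W $$ (i, l) * Y $$ (l, j))"
      by (rule sum.mono_neutral_cong_right) (use r ij in \<open>auto simp: U_def Z_def\<close>)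
    also have "\<dots> = (W * Y) $$ (i, j)"
      using W Y ij by (simp add: scalar_prod_def atLeast0LessThan)
    finally show "(W * Y) $$ (i, j) = (U * Z) $$ (i, j)" by simp
  qed (use W Y in \<open>auto simp: U_def Z_def\<close>)
qed

lemma mrank_mult_le_inner_dim:
  "U \<in> carrier_mat n k \<Longrightarrow> Y \<in> carrier_mat k m \<Longrightarrow> mrank (U * Y) \<le> k"
  using vec_space.rank_mult_le_inner_dim unfolding mrank_def by (metis carrier_matD(1) index_mult_mat(2))

lemma mrank_factorization:
  assumes A: "A \<in> carrier_mat n m" and r: "mrank A \<le> k"
  shows "\<exists>U Y. U \<in> carrier_mat n k \<and> Y \<in> carrier_mat k m \<and> A = U * Y"
proof -
  obtain W Y where "W \<in> carrier_mat n (mrank A)" "Y \<in> carrier_mat (mrank A) m" "A = W * Y"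
    using vec_space.rank_factorization[OF A] A unfolding mrank_def by auto
  then show ?thesis using mult_pad_inner_dim[OF _ _ r] by metis
qed

lemma mrank_eq_0_iff:
  assumes A: "A \<in> carrier_mat n m"
  shows "mrank A = 0 \<longleftrightarrow> A = 0\<^sub>m n m"
proof
  assume "mrank A = 0"
  then obtain U Y where "U \<in> carrier_mat n 0" "Y \<in> carrier_mat 0 m" "A = U * Y"
    using mrank_factorization[OF A, of 0] by blast
  then show "A = 0\<^sub>m n m" by (intro eq_matI) (auto simp: scalar_prod_def)
next
  assume "A = 0\<^sub>m n m"
  then show "mrank A = 0" unfolding mrank_def by (simp add: vec_space.rank_0I)
qed

lemma mrank_smult_le:
  assumes A: "A \<in> carrier_mat n m"
  shows "mrank (c \<cdot>\<^sub>m A) \<le> mrank A"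
proof -
  obtain U Y where UY: "U \<in> carrier_mat n (mrank A)" "Y \<in> carrier_mat (mrank A) m" "A = U * Y"
    using mrank_factorization[OF A order.refl] by blast
  have "c \<cdot>\<^sub>m A = (c \<cdot>\<^sub>m U) * Y" using mult_smult_assoc_mat[OF UY(1,2)] UY(3) by simp
  then show ?thesis using mrank_mult_le_inner_dim[of "c \<cdot>\<^sub>m U" n "mrank A" Y m] UY by simp
qed

lemma mrank_smult:
  assumes A: "A \<in> carrier_mat n m" and c: "c \<noteq> 0"
  shows "mrank (c \<cdot>\<^sub>m A) = mrank A"
proof -
  have "A = inverse c \<cdot>\<^sub>m (c \<cdot>\<^sub>m A)" by (rule eq_matI) (use c in auto)
  then have "mrank A \<le> mrank (c \<cdot>\<^sub>m A)"
    using mrank_smult_le[of "c \<cdot>\<^sub>m A" n m "inverse c"] A by simp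
  then show ?thesis using mrank_smult_le[OF A, of c] by linarith
qed

lemma mrank_add_le:
  "A \<in> carrier_mat n m \<Longrightarrow> B \<in> carrier_mat n m \<Longrightarrow> mrank (A + B) \<le> mrank A + mrank B"
  using vec_space.rank_subadditive unfolding mrank_def by (metis carrier_matD(1) index_add_mat(2))

lemma mrank_le_1_minor:
  assumes A: "A \<in> carrier_mat n m" and r: "mrank A \<le> 1"
    and "i < n" "k < n" "j < m" "l < m"
  shows "A $$ (i, j) * A $$ (k, l) = A $$ (i, l) * A $$ (k, j)"
proof -
  obtain U Y where "U \<in> carrier_mat n 1" "Y \<in> carrier_mat 1 m" "A = U * Y"
    using mrank_factorization[OF A r] by blast
  then have "\<And>a b. a < n \<Longrightarrow> b < m \<Longrightarrow> A $$ (a, b) = U $$ (a, 0) * Y $$ (0, b)"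
    by (simp add: scalar_prod_def)
  with assms show ?thesis by simp
qed

lemma mrank_one_mat: "mrank (1\<^sub>m n :: complex mat) = n"
  using vec_space.det_rank_iff[of "1\<^sub>m n :: complex mat" n] unfolding mrank_def by simp

lemma mrank_mult_mult_le:
  assumes "A \<in> carrier_mat n k" "B \<in> carrier_mat k l" "C \<in> carrier_mat l m"
  shows "mrank (A * B * C) \<le> mrank B"
proof -
  obtain U Y where UY: "U \<in> carrier_mat k (mrank B)" "Y \<in> carrier_mat (mrank B) l" "B = U * Y"
    using mrank_factorization[OF assms(2) order.refl] by blast
  have "A * B * C = (A * U) * (Y * C)"
    using assms UY(1,2) unfolding UY(3) by (simp add: mat_dim_simps)
  moreover have "mrank ((A * U) * (Y * C)) \<le> mrank B"
    by (rule mrank_mult_le_inner_dim) (use assms UY in auto)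
  ultimately show ?thesis by simp
qed

lemma col_vector_nonzero_entry:
  assumes "A \<in> carrier_mat d 1" "A \<noteq> 0\<^sub>m d 1"
  shows "\<exists>k<d. A $$ (k, 0) \<noteq> 0"
proof (rule ccontr)
  assume "\<not> (\<exists>k<d. A $$ (k, 0) \<noteq> 0)"
  then have "A = 0\<^sub>m d 1" using assms(1) by (intro eq_matI) auto
  with assms(2) show False by simp
qed

lemma index_outer_combination:
  fixes A B :: "complex mat"
  assumes "A \<in> carrier_mat d 1" "B \<in> carrier_mat d 1" "i < d" "j < d"
  shows "(p \<cdot>\<^sub>m (A * mat_adjoint A) + q \<cdot>\<^sub>m (A * mat_adjoint B) + r \<cdot>\<^sub>m (B * mat_adjoint A)
      + s \<cdot>\<^sub>m (B * mat_adjoint B)) $$ (i, j) =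
    p * A $$ (i, 0) * cnj (A $$ (j, 0)) + q * A $$ (i, 0) * cnj (B $$ (j, 0))
    + r * B $$ (i, 0) * cnj (A $$ (j, 0)) + s * B $$ (i, 0) * cnj (B $$ (j, 0))"
  using assms by (simp add: scalar_prod_def mult.assoc)

text \<open>The \<open>{k, l}\<close> principal minor of \<open>[A B] K [A B]\<^sup>*\<close> is \<open>det K \<cdot> |A\<^sub>k B\<^sub>l - A\<^sub>l B\<^sub>k|\<^sup>2\<close>.\<close>

lemma mrank_outer_combination_eq_2:
  fixes A B :: "complex mat"
  assumes A: "A \<in> carrier_mat d 1" and B: "B \<in> carrier_mat d 1" and kl: "k < d" "l < d"
    and indep: "A $$ (k, 0) * B $$ (l, 0) \<noteq> A $$ (l, 0) * B $$ (k, 0)"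
    and det: "p * s \<noteq> q * r"
  shows "mrank (p \<cdot>\<^sub>m (A * mat_adjoint A) + q \<cdot>\<^sub>m (A * mat_adjoint B) + r \<cdot>\<^sub>m (B * mat_adjoint A)
      + s \<cdot>\<^sub>m (B * mat_adjoint B)) = 2" (is "mrank ?M = 2")
proof -
  note entry = index_outer_combination[OF A B]
  have M: "?M \<in> carrier_mat d d" using A B by auto
  define V1 where "V1 = p \<cdot>\<^sub>m mat_adjoint A + q \<cdot>\<^sub>m mat_adjoint B"
  define V2 where "V2 = r \<cdot>\<^sub>m mat_adjoint A + s \<cdot>\<^sub>m mat_adjoint B"
  have V: "V1 \<in> carrier_mat 1 d" "V2 \<in> carrier_mat 1 d" using A B unfolding V1_def V2_def by auto
  have "?M = A * V1 + B * V2"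
    using A B V by (intro eq_matI) (auto simp: entry V1_def V2_def scalar_prod_def algebra_simps)
  then have "mrank ?M \<le> mrank (A * V1) + mrank (B * V2)"
    using mrank_add_le[of "A * V1" d d "B * V2"] A B V by simp
  also have "\<dots> \<le> 1 + 1"
    using mrank_mult_le_inner_dim[OF A V(1)] mrank_mult_le_inner_dim[OF B V(2)] by simp
  finally have "mrank ?M \<le> 2" by simp
  moreover have "\<not> mrank ?M \<le> 1"
  proof
    assume "mrank ?M \<le> 1"
    then have minor: "?M $$ (k, k) * ?M $$ (l, l) - ?M $$ (k, l) * ?M $$ (l, k) = 0"
      using mrank_le_1_minor[OF M _ kl(1,2,1,2)] by simp
    define D where "D = A $$ (k, 0) * B $$ (l, 0) - A $$ (l, 0) * B $$ (k, 0)"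
    have "D \<noteq> 0" using indep unfolding D_def by simp
    then have nonzero: "(p * s - q * r) * (D * cnj D) \<noteq> 0" using det by simp
    have "?M $$ (k, k) * ?M $$ (l, l) - ?M $$ (k, l) * ?M $$ (l, k) = (p * s - q * r) * (D * cnj D)"
      unfolding entry[OF kl(1,1)] entry[OF kl(2,2)] entry[OF kl(1,2)] entry[OF kl(2,1)] D_def
      by (simp add: algebra_simps)
    with minor nonzero show False by simp
  qed
  ultimately show ?thesis by simp
qed

lemma outer_combination_dependent:
  fixes A B :: "complex mat"
  assumes A: "A \<in> carrier_mat d 1" and B: "B \<in> carrier_mat d 1"
    and dep: "\<And>i. i < d \<Longrightarrow> B $$ (i, 0) = \<kappa> * A $$ (i, 0)"
  shows "p \<cdot>\<^sub>m (A * mat_adjoint A) + q \<cdot>\<^sub>m (A * mat_adjoint B) + r \<cdot>\<^sub>m (B * mat_adjoint A)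
      + s \<cdot>\<^sub>m (B * mat_adjoint B) = (p + q * cnj \<kappa> + r * \<kappa> + s * \<kappa> * cnj \<kappa>) \<cdot>\<^sub>m (A * mat_adjoint A)"
  using A B by (intro eq_matI) (auto simp: index_outer_combination[OF A B] dep scalar_prod_def algebra_simps)

section \<open>Positive semidefinite matrices\<close>

lemma psd_carrier: "psd n A \<Longrightarrow> A \<in> carrier_mat n n"
  and psd_hermitian: "psd n A \<Longrightarrow> mat_adjoint A = A"
  unfolding psd_def by auto

lemma psd_diag:
  assumes psd: "psd n A" and p: "p < n"
  shows "A $$ (p, p) \<in> \<real>" "0 \<le> Re (A $$ (p, p))"
proof -
  have A: "A \<in> carrier_mat n n" using psd_carrier[OF psd] .
  have "conjugate (unit_vec n p) = (unit_vec n p :: complex vec)"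
    by (rule eq_vecI) (auto simp: unit_vec_def)
  then have "(A *\<^sub>v unit_vec n p) \<bullet>c unit_vec n p = A $$ (p, p)"
    using A p by (simp add: scalar_prod_right_unit)
  then show "A $$ (p, p) \<in> \<real>" "0 \<le> Re (A $$ (p, p))"
    using psd unit_vec_carrier unfolding psd_def by metis+
qed

lemma psd_congruence:
  assumes psd: "psd n A" and G: "G \<in> carrier_mat n m"
  shows "psd m (mat_adjoint G * A * G)"
proof -
  have A: "A \<in> carrier_mat n n" and herm: "mat_adjoint A = A"
    using psd by (auto simp: psd_def)
  have aG: "mat_adjoint G \<in> carrier_mat m n" using G by simp
  have "mat_adjoint (mat_adjoint G * A * G) = mat_adjoint G * A * G"
    using A G herm by (simp add: mat_adjoint_mult mat_dim_simps)
  moreover have "((mat_adjoint G * A * G) *\<^sub>v v) \<bullet>c v = (A *\<^sub>v (G *\<^sub>v v)) \<bullet>c (G *\<^sub>v v)"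
    if v: "v \<in> carrier_vec m" for v
  proof -
    have "(mat_adjoint G * A * G) *\<^sub>v v = mat_adjoint G *\<^sub>v (A *\<^sub>v (G *\<^sub>v v))"
      using assoc_mult_mat_vec[OF mult_carrier_mat[OF aG A] G v] assoc_mult_mat_vec[OF aG A, of "G *\<^sub>v v"]
        A G v by simp
    then show ?thesis using cscalar_prod_mat_adjoint[OF aG _ v, of "A *\<^sub>v (G *\<^sub>v v)"] A G v by simp
  qed
  ultimately show ?thesis using psd A G unfolding psd_def by auto
qed

lemma hermitian_quad_form_shift:
  assumes rho: "\<rho> \<in> carrier_mat n n" and herm: "mat_adjoint \<rho> = \<rho>"
    and v: "v \<in> carrier_vec n" and c: "cnj c = c"
  defines "u \<equiv> \<rho> *\<^sub>v v"
  shows "(\<rho> *\<^sub>v (v - c \<cdot>\<^sub>v u)) \<bullet>c (v - c \<cdot>\<^sub>v u)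
    = (\<rho> *\<^sub>v v) \<bullet>c v - 2 * c * (u \<bullet>c u) + c * c * ((\<rho> *\<^sub>v u) \<bullet>c u)"
proof -
  have u: "u \<in> carrier_vec n" and ru: "\<rho> *\<^sub>v u \<in> carrier_vec n" unfolding u_def using rho v by auto
  have "(\<rho> *\<^sub>v u) \<bullet>c v = u \<bullet>c u"
    unfolding u_def using cscalar_prod_mat_adjoint[OF rho _ v, of "\<rho> *\<^sub>v v"] herm rho v by simp
  moreover have "\<rho> *\<^sub>v (v - c \<cdot>\<^sub>v u) = u - c \<cdot>\<^sub>v (\<rho> *\<^sub>v u)"
    unfolding u_def using rho v by (simp add: mult_minus_distrib_mat_vec mult_mat_vec)
  moreover have "conjugate (v - c \<cdot>\<^sub>v u) = conjugate v - c \<cdot>\<^sub>v conjugate u"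
    using c by (intro eq_vecI) (use v u in auto)
  moreover have "(u - c \<cdot>\<^sub>v (\<rho> *\<^sub>v u)) \<bullet> (conjugate v - c \<cdot>\<^sub>v conjugate u)
     = u \<bullet> conjugate v - c * (u \<bullet> conjugate u) - c * ((\<rho> *\<^sub>v u) \<bullet> conjugate v)
       + c * c * ((\<rho> *\<^sub>v u) \<bullet> conjugate u)"
    using u ru v
    by (simp add: minus_scalar_prod_distrib scalar_prod_minus_distrib
        smult_scalar_prod_distrib scalar_prod_smult_distrib algebra_simps)
  ultimately show ?thesis unfolding u_def by simp
qed

text \<open>Moving from \<open>v\<close> to \<open>v - t \<rho>v\<close> changes the (vanishing) quadratic form by
  \<open>-2t\<parallel>\<rho>v\<parallel>\<^sup>2 + O(t\<^sup>2)\<close>, which is negative for small \<open>t > 0\<close> unless \<open>\<rho>v = 0\<close>.\<close>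

lemma psd_quad_form_zero_imp:
  assumes psd: "psd n \<rho>" and v: "v \<in> carrier_vec n" and q: "(\<rho> *\<^sub>v v) \<bullet>c v = 0"
  shows "\<rho> *\<^sub>v v = 0\<^sub>v n"
proof -
  have rho: "\<rho> \<in> carrier_mat n n" and herm: "mat_adjoint \<rho> = \<rho>"
    and pos: "\<And>w. w \<in> carrier_vec n \<Longrightarrow> 0 \<le> Re ((\<rho> *\<^sub>v w) \<bullet>c w)"
    using psd unfolding psd_def by auto
  define u where "u = \<rho> *\<^sub>v v"
  have u: "u \<in> carrier_vec n" unfolding u_def using rho v by auto
  define N where "N = Re (u \<bullet>c u)"
  define K where "K = Re ((\<rho> *\<^sub>v u) \<bullet>c u)"
  have N: "u \<bullet>c u = of_real N" "N \<ge> 0"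
    unfolding N_def using conjugate_square_ge_0_vec[of u]
    by (auto simp: less_eq_complex_def complex_eq_iff)
  have K: "K \<ge> 0" unfolding K_def using pos[OF u] by auto
  have "N = 0"
  proof (rule ccontr)
    assume "N \<noteq> 0"
    then have Np: "N > 0" using N by auto
    define t where "t = N / (K + 1)"
    have tp: "t > 0" unfolding t_def using Np K by auto
    have "v - of_real t \<cdot>\<^sub>v u \<in> carrier_vec n" using v u by auto
    then have "0 \<le> Re ((\<rho> *\<^sub>v (v - of_real t \<cdot>\<^sub>v u)) \<bullet>c (v - of_real t \<cdot>\<^sub>v u))" by (rule pos)
    also have "(\<rho> *\<^sub>v (v - of_real t \<cdot>\<^sub>v u)) \<bullet>c (v - of_real t \<cdot>\<^sub>v u)
        = - 2 * of_real t * of_real N + of_real t * of_real t * ((\<rho> *\<^sub>v u) \<bullet>c u)"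
      using hermitian_quad_form_shift[OF rho herm v, of "of_real t"] q N(1) unfolding u_def[symmetric] by simp
    also have "Re \<dots> = t * (t * K - 2 * N)" unfolding K_def by (simp add: algebra_simps)
    finally have "2 * N \<le> t * K" using tp by (simp add: zero_le_mult_iff)
    moreover have "t * K < N" unfolding t_def using Np K by (simp add: field_simps)
    ultimately show False using Np by auto
  qed
  then show ?thesis using u N(1) unfolding u_def by simp
qed

lemma psd_mult_eq_0:
  assumes psd: "psd n \<rho>" and G: "G \<in> carrier_mat n m"
    and diag: "\<And>j. j < m \<Longrightarrow> (mat_adjoint G * \<rho> * G) $$ (j, j) = 0"
  shows "\<rho> * G = 0\<^sub>m n m"
proof (rule eq_matI)
  have rho: "\<rho> \<in> carrier_mat n n" using psd_carrier[OF psd] .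
  fix i j assume "i < dim_row (0\<^sub>m n m)" "j < dim_col (0\<^sub>m n m)"
  then have i: "i < n" and j: "j < m" by auto
  have cj: "col G j \<in> carrier_vec n" using G j by auto
  have "(\<rho> *\<^sub>v col G j) \<bullet>c col G j = conjugate (col G j) \<bullet> (\<rho> *\<^sub>v col G j)"
    using comm_scalar_prod[of "\<rho> *\<^sub>v col G j" n "conjugate (col G j)"] rho cj by simp
  also have "\<dots> = (mat_adjoint G * \<rho> * G) $$ (j, j)"
    using G rho j by (simp add: row_mat_adjoint assoc_mult_mat_dim mult_mat_vec_def)
  finally have "\<rho> *\<^sub>v col G j = 0\<^sub>v n"
    using psd_quad_form_zero_imp[OF psd cj] diag[OF j] by simp
  then show "(\<rho> * G) $$ (i, j) = 0\<^sub>m n m $$ (i, j)"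
    using rho G i j by (metis carrier_matD index_col index_mult_mat(1,2) index_zero_mat(1) index_zero_vec(1)
        col_mult2 index_mult_mat_vec)
qed (use psd_carrier[OF psd] G in auto)

lemma psd_rank_1_outer:
  assumes psd: "psd n A" and r: "mrank A = 1"
  shows "\<exists>a. a \<in> carrier_mat n 1 \<and> A = a * mat_adjoint a"
proof -
  have A: "A \<in> carrier_mat n n" and herm: "mat_adjoint A = A"
    using psd by (auto simp: psd_def)
  have minor: "A $$ (i, j) * A $$ (k, l) = A $$ (i, l) * A $$ (k, j)"
    if "i < n" "j < n" "k < n" "l < n" for i j k l
    using mrank_le_1_minor[OF A] r that by simp
  have "\<exists>p<n. A $$ (p, p) \<noteq> 0"
  proof (rule ccontr)
    assume "\<not> (\<exists>p<n. A $$ (p, p) \<noteq> 0)"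
    then have diag0: "A $$ (i, i) = 0" if "i < n" for i using that by blast
    have "A = 0\<^sub>m n n"
    proof (rule eq_matI)
      fix i j assume "i < dim_row (0\<^sub>m n n)" "j < dim_col (0\<^sub>m n n)"
      then have ij: "i < n" "j < n" by auto
      have "A $$ (i, j) * cnj (A $$ (i, j)) = 0"
        using minor[OF ij(1,1,2,2)] diag0 ij hermitian_index[OF herm A ij(2,1)] by simp
      then show "A $$ (i, j) = 0\<^sub>m n n $$ (i, j)" using ij by simp
    qed (use A in auto)
    then show False using r mrank_eq_0_iff[OF A] by simp
  qed
  then obtain p where p: "p < n" "A $$ (p, p) \<noteq> 0" by blast
  obtain t where "A $$ (p, p) = of_real t" using psd_diag(1)[OF psd p(1)] by (metis Reals_cases)
  then have t: "A $$ (p, p) = of_real t" "t > 0"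
    using psd_diag(2)[OF psd p(1)] p(2) by auto
  define a where "a = mat n 1 (\<lambda>(i, _). A $$ (i, p) / of_real (sqrt t))"
  have "A = a * mat_adjoint a"
  proof (rule eq_matI)
    fix i j assume "i < dim_row (a * mat_adjoint a)" "j < dim_col (a * mat_adjoint a)"
    then have ij: "i < n" "j < n" unfolding a_def by auto
    have "of_real (sqrt t) * of_real (sqrt t) = (of_real t :: complex)"
      using t(2) by (simp flip: of_real_mult)
    then have "(a * mat_adjoint a) $$ (i, j) = A $$ (i, p) * cnj (A $$ (j, p)) / of_real t"
      using ij unfolding a_def by (simp add: scalar_prod_def)
    also have "\<dots> = A $$ (i, j)"
      using minor[OF ij(1,2) p(1) p(1)] minor[OF ij(1) p(1,1) ij(2)] hermitian_index[OF herm A p(1) ij(2)] t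
      by (simp add: field_simps)
    finally show "A $$ (i, j) = (a * mat_adjoint a) $$ (i, j)" by simp
  qed (use A in \<open>auto simp: a_def\<close>)
  moreover have "a \<in> carrier_mat n 1" unfolding a_def by simp
  ultimately show ?thesis by blast
qed

lemma col_vector_gram_nonzero:
  assumes A: "A \<in> carrier_mat d 1" and A0: "A \<noteq> 0\<^sub>m d 1"
  shows "\<exists>s. s \<noteq> 0 \<and> mat_adjoint A * A = s \<cdot>\<^sub>m (1\<^sub>m 1 :: complex mat)"
proof (intro exI conjI)
  have cA: "col A 0 \<in> carrier_vec d" using A by auto
  have "col A 0 \<noteq> 0\<^sub>v d"
  proof
    assume "col A 0 = 0\<^sub>v d"
    then have "A = 0\<^sub>m d 1" using A by (intro eq_matI) (auto simp: vec_eq_iff)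
    then show False using A0 by simp
  qed
  moreover have "(mat_adjoint A * A) $$ (0, 0) = col A 0 \<bullet>c col A 0"
    using A comm_scalar_prod[OF cA, of "conjugate (col A 0)"] cA by (simp add: row_mat_adjoint)
  ultimately show "(mat_adjoint A * A) $$ (0, 0) \<noteq> 0" using cA by simp
  show "mat_adjoint A * A = (mat_adjoint A * A) $$ (0, 0) \<cdot>\<^sub>m 1\<^sub>m 1"
    using A by (intro eq_matI) auto
qed

text \<open>The point is that \<open>\<rho> E \<Pi> = 0\<close> for the orthogonal projection \<open>\<Pi>\<close> onto \<open>A\<^sup>\<bottom>\<close>.\<close>

lemma psd_offdiag_block_factor:
  assumes psd: "psd N \<rho>" and E: "E \<in> carrier_mat N d" and F: "F \<in> carrier_mat N d'"
    and A: "A \<in> carrier_mat d 1" and A0: "A \<noteq> 0\<^sub>m d 1"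
    and block: "mat_adjoint E * \<rho> * E = A * mat_adjoint A"
  shows "\<exists>Y. Y \<in> carrier_mat d' 1 \<and> mat_adjoint F * \<rho> * E = Y * mat_adjoint A"
proof -
  have rho: "\<rho> \<in> carrier_mat N N" using psd_carrier[OF psd] .
  note dims[simp] = carrier_matD[OF rho] carrier_matD[OF E] carrier_matD[OF F] carrier_matD[OF A]
  obtain s where s: "s \<noteq> 0" "mat_adjoint A * A = s \<cdot>\<^sub>m 1\<^sub>m 1"
    using col_vector_gram_nonzero[OF A A0] by blast
  define Pi where "Pi = 1\<^sub>m d - (1 / s) \<cdot>\<^sub>m (A * mat_adjoint A)"
  have Pi_dim[simp]: "dim_row Pi = d" "dim_col Pi = d" unfolding Pi_def by auto
  have "mat_adjoint A * Pi = mat_adjoint A - (1 / s) \<cdot>\<^sub>m (mat_adjoint A * A * mat_adjoint A)"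
    unfolding Pi_def by (simp add: mat_dim_simps)
  also have "\<dots> = 0\<^sub>m 1 d"
    unfolding s(2) using s(1) by (intro eq_matI) (auto simp: mat_dim_simps)
  finally have APi: "mat_adjoint A * Pi = 0\<^sub>m 1 d" .
  have "mat_adjoint (E * Pi) * \<rho> * (E * Pi) = mat_adjoint Pi * ((mat_adjoint E * \<rho> * E) * Pi)"
    by (simp add: mat_dim_simps mat_adjoint_mult)
  also have "\<dots> = mat_adjoint Pi * (A * (mat_adjoint A * Pi))"
    unfolding block by (simp add: mat_dim_simps)
  also have "\<dots> = 0\<^sub>m d d" unfolding APi by (simp add: mat_dim_simps)
  finally have "\<rho> * (E * Pi) = 0\<^sub>m N d"
    by (intro psd_mult_eq_0[OF psd]) auto
  then have "mat_adjoint F * \<rho> * E * Pi = 0\<^sub>m d' d"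
    by (simp add: mat_dim_simps)
  then have "mat_adjoint F * \<rho> * E - (1 / s) \<cdot>\<^sub>m (mat_adjoint F * \<rho> * E * A * mat_adjoint A) = 0\<^sub>m d' d"
    unfolding Pi_def by (simp add: mat_dim_simps)
  then have "mat_adjoint F * \<rho> * E = (1 / s) \<cdot>\<^sub>m (mat_adjoint F * \<rho> * E * A * mat_adjoint A)"
    by (rule eq_of_minus_eq_0_mat[rotated 2]) auto
  also have "\<dots> = ((1 / s) \<cdot>\<^sub>m (mat_adjoint F * \<rho> * E * A)) * mat_adjoint A"
    by (simp add: mat_dim_simps)
  finally have "mat_adjoint F * \<rho> * E = ((1 / s) \<cdot>\<^sub>m (mat_adjoint F * \<rho> * E * A)) * mat_adjoint A" .
  moreover have "(1 / s) \<cdot>\<^sub>m (mat_adjoint F * \<rho> * E * A) \<in> carrier_mat d' 1" by auto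
  ultimately show ?thesis by blast
qed

lemma psd_offdiag_block_outer:
  assumes psd: "psd N \<rho>" and E: "E \<in> carrier_mat N d" and F: "F \<in> carrier_mat N d"
    and A: "A \<in> carrier_mat d 1" "A \<noteq> 0\<^sub>m d 1" and B: "B \<in> carrier_mat d 1" "B \<noteq> 0\<^sub>m d 1"
    and blockE: "mat_adjoint E * \<rho> * E = A * mat_adjoint A"
    and blockF: "mat_adjoint F * \<rho> * F = B * mat_adjoint B"
  shows "\<exists>c. mat_adjoint E * \<rho> * F = c \<cdot>\<^sub>m (A * mat_adjoint B)"
proof -
  have rho: "\<rho> \<in> carrier_mat N N" and herm: "mat_adjoint \<rho> = \<rho>"
    using psd by (auto simp: psd_def)
  obtain Y where Y: "Y \<in> carrier_mat d 1" "mat_adjoint F * \<rho> * E = Y * mat_adjoint A"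
    using psd_offdiag_block_factor[OF psd E F A blockE] by blast
  obtain Z where Z: "Z \<in> carrier_mat d 1" "mat_adjoint E * \<rho> * F = Z * mat_adjoint B"
    using psd_offdiag_block_factor[OF psd F E B blockF] by blast
  have "mat_adjoint E * \<rho> * F = mat_adjoint (mat_adjoint F * \<rho> * E)"
    using rho E F herm by (simp add: mat_adjoint_mult mat_dim_simps)
  then have ZY: "Z * mat_adjoint B = A * mat_adjoint Y"
    using Y Z A by (simp add: mat_adjoint_mult)
  obtain l0 where l0: "l0 < d" "B $$ (l0, 0) \<noteq> 0" using col_vector_nonzero_entry[OF B] by blast
  define c where "c = cnj (Y $$ (l0, 0)) / cnj (B $$ (l0, 0))"
  have "Z $$ (k, 0) = c * A $$ (k, 0)" if k: "k < d" for k
  proof -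
    have "(Z * mat_adjoint B) $$ (k, l0) = (A * mat_adjoint Y) $$ (k, l0)" using ZY by simp
    then have "Z $$ (k, 0) * cnj (B $$ (l0, 0)) = A $$ (k, 0) * cnj (Y $$ (l0, 0))"
      using k l0 A B Y Z by (simp add: scalar_prod_def)
    then show ?thesis using l0(2) unfolding c_def by (simp add: field_simps)
  qed
  then have "Z * mat_adjoint B = c \<cdot>\<^sub>m (A * mat_adjoint B)"
    using A B Z by (intro eq_matI) (auto simp: scalar_prod_def)
  then show ?thesis using Z by auto
qed

section \<open>Rank-one projections on \<open>\<complex>\<^sup>2\<close>\<close>

definition ketbra :: "complex \<Rightarrow> complex \<Rightarrow> complex mat" where
  "ketbra x y = mat 2 2 (\<lambda>(i, j). (if i = 0 then x else y) * cnj (if j = 0 then x else y))"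

lemma ketbra_carrier [simp]: "ketbra x y \<in> carrier_mat 2 2"
  and dim_ketbra [simp]: "dim_row (ketbra x y) = 2" "dim_col (ketbra x y) = 2"
  unfolding ketbra_def by simp_all

lemma index_ketbra [simp]:
  "ketbra x y $$ (0, 0) = x * cnj x" "ketbra x y $$ (0, 1) = x * cnj y"
  "ketbra x y $$ (1, 0) = y * cnj x" "ketbra x y $$ (1, 1) = y * cnj y"
  "ketbra x y $$ (0, Suc 0) = x * cnj y" "ketbra x y $$ (Suc 0, 0) = y * cnj x"
  "ketbra x y $$ (Suc 0, Suc 0) = y * cnj y"
  unfolding ketbra_def by simp_all

lemma mat2_eqI:
  assumes "A \<in> carrier_mat 2 2" "B \<in> carrier_mat 2 2"
    "A $$ (0, 0) = B $$ (0, 0)" "A $$ (0, 1) = B $$ (0, 1)"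
    "A $$ (1, 0) = B $$ (1, 0)" "A $$ (1, 1) = B $$ (1, 1)"
  shows "A = B"
proof (rule eq_matI)
  fix i j assume "i < dim_row B" "j < dim_col B"
  then have "i = 0 \<or> i = 1" "j = 0 \<or> j = 1" using assms by auto
  then show "A $$ (i, j) = B $$ (i, j)" using assms by auto
qed (use assms in auto)

lemma ketbra_perp:
  assumes "cnj x * x + cnj y * y = 1"
  shows "ketbra (- cnj y) (cnj x) = 1\<^sub>m 2 - ketbra x y"
proof -
  have "y * cnj y = 1 - x * cnj x" using assms by (simp add: algebra_simps)
  moreover have "1\<^sub>m 2 - ketbra x y \<in> carrier_mat 2 2" by (simp add: minus_carrier_mat)
  ultimately show ?thesis by (intro mat2_eqI) (simp_all add: algebra_simps)
qed

lemma ketbra_neq_perp: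
  assumes "cnj x * x + cnj y * y = 1"
  shows "ketbra x y \<noteq> ketbra (- cnj y) (cnj x)"
proof
  assume eq: "ketbra x y = ketbra (- cnj y) (cnj x)"
  then have "ketbra x y $$ (0, 1) = ketbra (- cnj y) (cnj x) $$ (0, 1)" by simp
  then have "x = 0 \<or> y = 0" by (simp add: mult.commute)
  moreover have "ketbra x y $$ (0, 0) = ketbra (- cnj y) (cnj x) $$ (0, 0)" using eq by simp
  ultimately show False using assms by (auto simp: mult.commute)
qed

lemma qubit_basis_coords:
  fixes x y f1 f2 :: complex
  assumes "cnj x * x + cnj y * y = 1"
  defines "\<alpha> \<equiv> cnj x * f1 + cnj y * f2" and "\<beta> \<equiv> - y * f1 + x * f2"
  shows "f1 = \<alpha> * x + \<beta> * (- cnj y)" "f2 = \<alpha> * y + \<beta> * cnj x"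
proof -
  have "\<alpha> * x + \<beta> * (- cnj y) = f1 * (cnj x * x + cnj y * y)"
    "\<alpha> * y + \<beta> * cnj x = f2 * (cnj x * x + cnj y * y)"
    unfolding \<alpha>_def \<beta>_def by (simp_all add: algebra_simps)
  then show "f1 = \<alpha> * x + \<beta> * (- cnj y)" "f2 = \<alpha> * y + \<beta> * cnj x"
    using assms(1) by simp_all
qed

lemma ketbra_eq_if_perp_coord_0:
  assumes u: "cnj x * x + cnj y * y = 1" and uf: "cnj f1 * f1 + cnj f2 * f2 = 1"
    and \<beta>: "- y * f1 + x * f2 = 0"
  shows "ketbra f1 f2 = ketbra x y"
proof -
  define \<alpha> where "\<alpha> = cnj x * f1 + cnj y * f2"
  have f: "f1 = \<alpha> * x" "f2 = \<alpha> * y"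
    using qubit_basis_coords[OF u, where ?f1.0 = f1 and ?f2.0 = f2] \<beta> unfolding \<alpha>_def by simp_all
  have "cnj f1 * f1 + cnj f2 * f2 = (cnj \<alpha> * \<alpha>) * (cnj x * x + cnj y * y)"
    unfolding f by (simp add: algebra_simps)
  then have "\<alpha> * cnj \<alpha> = 1" using u uf by (simp add: mult.commute)
  then have e: "(\<alpha> * p) * cnj (\<alpha> * q) = p * cnj q" for p q
    by (metis complex_cnj_mult mult.assoc mult.commute mult.left_neutral)
  show ?thesis by (intro mat2_eqI) (simp_all add: f e del: complex_cnj_mult)
qed

lemma ketbra_eq_perp_if_coord_0:
  assumes u: "cnj x * x + cnj y * y = 1" and uf: "cnj f1 * f1 + cnj f2 * f2 = 1"
    and \<alpha>: "cnj x * f1 + cnj y * f2 = 0"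
  shows "ketbra f1 f2 = ketbra (- cnj y) (cnj x)"
proof (rule ketbra_eq_if_perp_coord_0[OF _ uf])
  show "cnj (- cnj y) * - cnj y + cnj (cnj x) * cnj x = 1" using u by (simp add: algebra_simps)
  have "- cnj x * f1 + - cnj y * f2 = - (cnj x * f1 + cnj y * f2)" by simp
  then show "- cnj x * f1 + - cnj y * f2 = 0" using \<alpha> by simp
qed

lemma rank_one_proj2_entries:
  assumes P: "rank_one_proj2 P"
  defines "p \<equiv> P $$ (0, 0)" and "q \<equiv> P $$ (0, 1)"
  shows "P $$ (1, 0) = cnj q" "P $$ (1, 1) = 1 - p" "p \<in> \<real>" "p * p + q * cnj q = p"
proof -
  have c: "P \<in> carrier_mat 2 2" and idem: "P * P = P" and h: "mat_adjoint P = P"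
    and r: "mrank P = 1"
    using P unfolding rank_one_proj2_def by auto
  define s where "s = P $$ (1, 1)"
  have entry: "(P * P) $$ (i, j) = P $$ (i, 0) * P $$ (0, j) + P $$ (i, 1) * P $$ (1, j)"
    if "i < 2" "j < 2" for i j
    using c that by (simp add: scalar_prod_def atLeast0LessThan lessThan_Suc numeral_2_eq_2 add.commute)
  show P10: "P $$ (1, 0) = cnj q" unfolding q_def using hermitian_index[OF h c, of 1 0] by simp
  show "p \<in> \<real>" unfolding p_def using hermitian_index[OF h c, of 0 0] by (simp add: Reals_cnj_iff)
  show E00: "p * p + q * cnj q = p"
    using entry[of 0 0] idem P10 unfolding p_def q_def by simp
  have E11: "cnj q * q + s * s = s"
    using entry[of 1 1] idem P10 unfolding s_def q_def by simp
  have E01: "q * (p + s - 1) = 0"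
    using entry[of 0 1] idem unfolding p_def q_def s_def by (simp add: algebra_simps)
  have "p + s = 1"
  proof (cases "q = 0")
    case True
    then have "p * p = p" "s * s = s" using E00 E11 by auto
    then have p01: "p = 0 \<or> p = 1" and s01: "s = 0 \<or> s = 1"
      by (metis mult_cancel_left2 mult_cancel_right2)+
    have "P \<noteq> 0\<^sub>m 2 2" "P \<noteq> 1\<^sub>m 2"
      using r mrank_eq_0_iff[OF c] mrank_one_mat[of 2] by auto
    moreover have "P = 0\<^sub>m 2 2" if "p = 0" "s = 0"
      using that True P10 c by (intro mat2_eqI) (auto simp: p_def q_def s_def)
    moreover have "P = 1\<^sub>m 2" if "p = 1" "s = 1"
      using that True P10 c by (intro mat2_eqI) (auto simp: p_def q_def s_def)
    ultimately have "\<not> (p = 0 \<and> s = 0)" "\<not> (p = 1 \<and> s = 1)" by blast+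
    then show ?thesis using p01 s01 by auto
  qed (use E01 in simp)
  then show "P $$ (1, 1) = 1 - p" unfolding s_def by (simp add: algebra_simps)
qed

lemma qubit_of_proj_entries:
  assumes p: "p \<in> \<real>" and pq: "p * p + q * cnj q = p"
  shows "\<exists>x y. cnj x * x + cnj y * y = 1 \<and> x * cnj x = p \<and> x * cnj y = q \<and> y * cnj y = 1 - p"
proof (cases "p = 0")
  case True
  then have "q = 0" using pq by simp
  with True show ?thesis by (intro exI[of _ 0] exI[of _ 1]) simp
next
  case False
  obtain r where r: "p = of_real r" using p by (metis Reals_cases)
  have qq: "q * cnj q = of_real (r - r * r)" using pq r by (simp add: algebra_simps)
  have "0 \<le> r - r * r"
    using qq complex_norm_square[of q] by (metis of_real_eq_iff zero_le_power2)
  moreover have "r \<noteq> 0" using False r by simp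
  ultimately have "r > 0" by (smt (verit) mult_neg_neg)
  define x where "x = complex_of_real (sqrt r)"
  define y where "y = cnj q / x"
  have xx: "x * cnj x = p" unfolding x_def r using \<open>r > 0\<close> by (simp flip: of_real_mult)
  have x0: "x \<noteq> 0" and xr: "cnj x = x" unfolding x_def using \<open>r > 0\<close> by simp_all
  have yy: "y * cnj y = 1 - p"
  proof -
    have "y * cnj y = (q * cnj q) / (x * cnj x)" unfolding y_def by (simp add: field_simps)
    also have "\<dots> = 1 - p" using xx pq False by (simp add: field_simps)
    finally show ?thesis .
  qed
  have xy: "x * cnj y = q" unfolding y_def using x0 xr by (simp add: field_simps)
  have "cnj x * x + cnj y * y = 1" using xx yy by (simp add: mult.commute)
  with xx xy yy show ?thesis by blast
qed

lemma rank_one_proj2_ketbra: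
  assumes "rank_one_proj2 P"
  shows "\<exists>x y. cnj x * x + cnj y * y = 1 \<and> P = ketbra x y"
proof -
  note e = rank_one_proj2_entries[OF assms]
  obtain x y where xy: "cnj x * x + cnj y * y = 1" "x * cnj x = P $$ (0, 0)"
    "x * cnj y = P $$ (0, 1)" "y * cnj y = 1 - P $$ (0, 0)"
    using qubit_of_proj_entries[OF e(3,4)] by blast
  have "y * cnj x = cnj (x * cnj y)" by simp
  then have "P = ketbra x y"
    using assms xy e(1,2) unfolding rank_one_proj2_def by (intro mat2_eqI) auto
  with xy show ?thesis by blast
qed

lemma nontriv_pm_complement:
  assumes "nontriv_pm P0 P1"
  shows "P1 = 1\<^sub>m 2 - P0" "P0 = 1\<^sub>m 2 - P1"
proof -
  have c: "P0 \<in> carrier_mat 2 2" "P1 \<in> carrier_mat 2 2" and sum: "P0 + P1 = 1\<^sub>m 2"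
    using assms unfolding nontriv_pm_def rank_one_proj2_def by auto
  have "P0 $$ (i, j) + P1 $$ (i, j) = 1\<^sub>m 2 $$ (i, j)" if "i < 2" "j < 2" for i j
    using arg_cong[OF sum, of "\<lambda>M. M $$ (i, j)"] c that by simp
  then show "P1 = 1\<^sub>m 2 - P0" "P0 = 1\<^sub>m 2 - P1"
    using c by (auto intro!: eq_matI simp: algebra_simps)
qed

lemma nontriv_pm_neq:
  assumes "nontriv_pm P0 P1"
  shows "P0 \<noteq> P1"
proof -
  obtain x y where u: "cnj x * x + cnj y * y = 1" and P0: "P0 = ketbra x y"
    using assms rank_one_proj2_ketbra unfolding nontriv_pm_def by blast
  then have "P1 = ketbra (- cnj y) (cnj x)" using nontriv_pm_complement(1)[OF assms] ketbra_perp[OF u] by simp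
  with P0 ketbra_neq_perp[OF u] show ?thesis by simp
qed

lemma measurements_distinct:
  fixes P :: "nat \<Rightarrow> nat \<Rightarrow> complex mat"
  assumes meas0: "nontriv_pm (P 0 0) (P 1 0)" and meas1: "nontriv_pm (P 0 1) (P 1 1)"
    and diff: "P 0 0 \<noteq> P 0 1 \<and> P 0 0 \<noteq> P 1 1"
    and "a < 2" "x < 2" "a' < 2" "x' < 2" "(a', x') \<noteq> (a, x)"
  shows "P a' x' \<noteq> P a x"
proof -
  have "P 1 0 \<noteq> P 1 1" "P 1 0 \<noteq> P 0 1"
    using diff nontriv_pm_complement[OF meas0] nontriv_pm_complement[OF meas1] by metis+
  then show ?thesis
    using assms(4-) diff nontriv_pm_neq[OF meas0] nontriv_pm_neq[OF meas1]
    by (auto simp: less_2_cases_iff)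
qed

section \<open>Blocks of an operator on \<open>\<complex>\<^sup>2 \<otimes> \<complex>\<^sup>d\<close>\<close>

text \<open>The \<open>2d \<times> d\<close> matrix of \<open>(x, y) \<otimes> \<one>\<^sub>d\<close> in the index convention of \<^const>\<open>tensor_id\<close>.\<close>

definition ket_tensor_id :: "nat \<Rightarrow> complex \<Rightarrow> complex \<Rightarrow> complex mat" where
  "ket_tensor_id d x y = mat (2 * d) d (\<lambda>(i, j). if i = j then x else if i = j + d then y else 0)"

definition sandwich :: "nat \<Rightarrow> complex mat \<Rightarrow> complex \<Rightarrow> complex \<Rightarrow> complex \<Rightarrow> complex \<Rightarrow> complex mat" where
  "sandwich d \<rho> x y x' y' = mat_adjoint (ket_tensor_id d x y) * \<rho> * ket_tensor_id d x' y'"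

lemma ket_tensor_id_carrier [simp]: "ket_tensor_id d x y \<in> carrier_mat (2 * d) d"
  and dim_ket_tensor_id [simp]:
    "dim_row (ket_tensor_id d x y) = 2 * d" "dim_col (ket_tensor_id d x y) = d"
  unfolding ket_tensor_id_def by simp_all

lemma index_ket_tensor_id:
  "i < 2 * d \<Longrightarrow> k < d \<Longrightarrow>
    ket_tensor_id d x y $$ (i, k) = (if i = k then x else if i = k + d then y else 0)"
  unfolding ket_tensor_id_def by simp

lemma sum_lessThan_double:
  fixes f :: "nat \<Rightarrow> 'a :: comm_monoid_add"
  shows "(\<Sum>k<2 * d. f k) = (\<Sum>k<d. f k) + (\<Sum>k<d. f (k + d))"
proof -
  have "{..<2 * d} = {..<d} \<union> {0 + d..<d + d}" by auto
  moreover have "sum f ({..<d} \<union> {0 + d..<d + d}) = sum f {..<d} + sum f {0 + d..<d + d}"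
    by (rule sum.union_disjoint) auto
  ultimately have "(\<Sum>k<2 * d. f k) = (\<Sum>k<d. f k) + sum f {0 + d..<d + d}" by simp
  also have "sum f {0 + d..<d + d} = (\<Sum>k<d. f (k + d))"
    by (subst sum.shift_bounds_nat_ivl) (simp add: atLeast0LessThan)
  finally show ?thesis .
qed

lemma mult_ket_tensor_id_index:
  assumes M: "M \<in> carrier_mat n (2 * d)" and i: "i < n" and k: "k < d"
  shows "(M * ket_tensor_id d x y) $$ (i, k) = M $$ (i, k) * x + M $$ (i, k + d) * y"
proof -
  have "(M * ket_tensor_id d x y) $$ (i, k) = (\<Sum>l<2 * d. M $$ (i, l) * ket_tensor_id d x y $$ (l, k))"
    using M i k by (simp add: scalar_prod_def atLeast0LessThan)
  also have "\<dots> = (\<Sum>l<d. if l = k then M $$ (i, l) * x else 0)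
      + (\<Sum>l<d. if l = k then M $$ (i, l + d) * y else 0)"
    unfolding sum_lessThan_double
    by (intro arg_cong2[where f = "(+)"] sum.cong) (use k in \<open>auto simp: index_ket_tensor_id\<close>)
  finally show ?thesis using k by simp
qed

lemma adjoint_ket_tensor_id_mult_index:
  assumes M: "M \<in> carrier_mat (2 * d) m" and k: "k < d" and j: "j < m"
  shows "(mat_adjoint (ket_tensor_id d x y) * M) $$ (k, j) = cnj x * M $$ (k, j) + cnj y * M $$ (k + d, j)"
proof -
  have "(mat_adjoint (ket_tensor_id d x y) * M) $$ (k, j)
      = (\<Sum>l<2 * d. cnj (ket_tensor_id d x y $$ (l, k)) * M $$ (l, j))"
    using M j k by (simp add: scalar_prod_def atLeast0LessThan)
  also have "\<dots> = (\<Sum>l<d. if l = k then cnj x * M $$ (l, j) else 0)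
      + (\<Sum>l<d. if l = k then cnj y * M $$ (l + d, j) else 0)"
    unfolding sum_lessThan_double
    by (intro arg_cong2[where f = "(+)"] sum.cong) (use k in \<open>auto simp: index_ket_tensor_id\<close>)
  finally show ?thesis using k by simp
qed

lemma ket_tensor_id_outer_index:
  assumes "i < 2 * d" "j < 2 * d"
  shows "(ket_tensor_id d a b * mat_adjoint (ket_tensor_id d a b)) $$ (i, j) =
    (if i mod d = j mod d then (if i < d then a else b) * cnj (if j < d then a else b) else 0)"
proof -
  have "(ket_tensor_id d a b * mat_adjoint (ket_tensor_id d a b)) $$ (i, j)
      = (\<Sum>k<d. ket_tensor_id d a b $$ (i, k) * cnj (ket_tensor_id d a b $$ (j, k)))"
    using assms by (simp add: scalar_prod_def atLeast0LessThan)
  also have "\<dots> = (\<Sum>k<d. if k = i mod d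
      then (if i < d then a else b) * cnj (ket_tensor_id d a b $$ (j, k)) else 0)"
    by (rule sum.cong) (use assms in \<open>auto simp: index_ket_tensor_id mod_if\<close>)
  also have "\<dots> = (if i < d then a else b) * cnj (ket_tensor_id d a b $$ (j, i mod d))"
    using assms by auto
  finally show ?thesis using assms by (auto simp: index_ket_tensor_id mod_if)
qed

lemma ket_tensor_id_completeness:
  assumes u: "cnj x * x + cnj y * y = 1"
  shows "ket_tensor_id d x y * mat_adjoint (ket_tensor_id d x y)
      + ket_tensor_id d (- cnj y) (cnj x) * mat_adjoint (ket_tensor_id d (- cnj y) (cnj x)) = 1\<^sub>m (2 * d)"
    (is "?E + ?F = _")
proof (rule eq_matI)
  fix i j assume "i < dim_row (1\<^sub>m (2 * d) :: complex mat)" "j < dim_col (1\<^sub>m (2 * d) :: complex mat)"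
  then have ij: "i < 2 * d" "j < 2 * d" by auto
  have "(?E + ?F) $$ (i, j) = ?E $$ (i, j) + ?F $$ (i, j)"
    using ij by (intro index_add_mat(1)) auto
  moreover have "x * cnj x + y * cnj y = 1" using u by (simp add: mult.commute)
  ultimately show "(?E + ?F) $$ (i, j) = 1\<^sub>m (2 * d) $$ (i, j)"
    using ij unfolding ket_tensor_id_outer_index[OF ij]
    by (cases "i < d"; cases "j < d") (auto simp: mod_if algebra_simps)
qed auto

lemma tensor_id_mult_index:
  assumes P: "P \<in> carrier_mat 2 2" and M: "M \<in> carrier_mat (2 * d) m"
    and a: "a < 2" and b: "b < d" and c: "c < m"
  shows "(tensor_id d P * M) $$ (a * d + b, c) = P $$ (a, 0) * M $$ (b, c) + P $$ (a, 1) * M $$ (b + d, c)"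
proof -
  have ab: "a * d + b < 2 * d" and md: "(a * d + b) mod d = b" "(a * d + b) div d = a"
    using a b by (auto simp: less_2_cases_iff)
  have "(tensor_id d P * M) $$ (a * d + b, c) = (\<Sum>l<2 * d. tensor_id d P $$ (a * d + b, l) * M $$ (l, c))"
    using M ab c by (simp add: scalar_prod_def atLeast0LessThan tensor_id_def)
  also have "\<dots> = (\<Sum>l<d. if l = b then P $$ (a, 0) * M $$ (l, c) else 0)
      + (\<Sum>l<d. if l = b then P $$ (a, 1) * M $$ (l + d, c) else 0)"
    unfolding sum_lessThan_double
    by (intro arg_cong2[where f = "(+)"] sum.cong) (use ab md b in \<open>auto simp: tensor_id_def\<close>)
  finally show ?thesis using b by simp
qed

lemma assem_ketbra:
  assumes rho: "\<rho> \<in> carrier_mat (2 * d) (2 * d)"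
  shows "assem d \<rho> (ketbra x y) = sandwich d \<rho> x y x y"
proof (rule eq_matI)
  fix b b' assume "b < dim_row (sandwich d \<rho> x y x y)" "b' < dim_col (sandwich d \<rho> x y x y)"
  then have b: "b < d" "b' < d" by (auto simp: sandwich_def)
  have "assem d \<rho> (ketbra x y) $$ (b, b') =
      (tensor_id d (ketbra x y) * \<rho>) $$ (0 * d + b, b')
      + (tensor_id d (ketbra x y) * \<rho>) $$ (1 * d + b, b' + d)"
    unfolding assem_def ptrace_A_def using b by (simp add: numeral_2_eq_2 add.commute)
  moreover have "sandwich d \<rho> x y x y $$ (b, b') =
      (mat_adjoint (ket_tensor_id d x y) * \<rho>) $$ (b, b') * x
      + (mat_adjoint (ket_tensor_id d x y) * \<rho>) $$ (b, b' + d) * y"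
    unfolding sandwich_def by (rule mult_ket_tensor_id_index) (use rho b in auto)
  ultimately show "assem d \<rho> (ketbra x y) $$ (b, b') = sandwich d \<rho> x y x y $$ (b, b')"
    using tensor_id_mult_index[OF ketbra_carrier rho _ b(1), of 0 b']
      tensor_id_mult_index[OF ketbra_carrier rho _ b(1), of 1 "b' + d"]
      adjoint_ket_tensor_id_mult_index[OF rho b(1), of b' x y]
      adjoint_ket_tensor_id_mult_index[OF rho b(1), of "b' + d" x y] b
    by (simp add: algebra_simps)
qed (auto simp: assem_def ptrace_A_def sandwich_def)

lemma sandwich_carrier [simp]: "sandwich d \<rho> x y x' y' \<in> carrier_mat d d"
  and dim_sandwich [simp]: "dim_row (sandwich d \<rho> x y x' y') = d" "dim_col (sandwich d \<rho> x y x' y') = d"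
  unfolding sandwich_def by auto

lemma sandwich_index:
  assumes rho: "\<rho> \<in> carrier_mat (2 * d) (2 * d)" and k: "k < d" and l: "l < d"
  shows "sandwich d \<rho> x y x' y' $$ (k, l) = cnj x * x' * \<rho> $$ (k, l) + cnj x * y' * \<rho> $$ (k, l + d)
     + cnj y * x' * \<rho> $$ (k + d, l) + cnj y * y' * \<rho> $$ (k + d, l + d)"
proof -
  have M: "mat_adjoint (ket_tensor_id d x y) * \<rho> \<in> carrier_mat d (2 * d)" using rho by auto
  show ?thesis unfolding sandwich_def mult_ket_tensor_id_index[OF M k l]
    using adjoint_ket_tensor_id_mult_index[OF rho k, of l x y]
      adjoint_ket_tensor_id_mult_index[OF rho k, of "l + d" x y] l
    by (simp add: algebra_simps)
qed

lemma sandwich_swap: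
  assumes "\<rho> \<in> carrier_mat (2 * d) (2 * d)" "mat_adjoint \<rho> = \<rho>"
  shows "sandwich d \<rho> x' y' x y = mat_adjoint (sandwich d \<rho> x y x' y')"
  using assms by (simp add: sandwich_def mat_adjoint_mult mat_dim_simps)

lemma sandwich_psd:
  assumes "psd (2 * d) \<rho>"
  shows "psd d (sandwich d \<rho> x y x y)"
  unfolding sandwich_def by (rule psd_congruence[OF assms]) simp

lemma sandwich_basis_expansion:
  fixes x y f1 f2 :: complex
  assumes rho: "\<rho> \<in> carrier_mat (2 * d) (2 * d)" and u: "cnj x * x + cnj y * y = 1"
  defines "\<alpha> \<equiv> cnj x * f1 + cnj y * f2" and "\<beta> \<equiv> - y * f1 + x * f2"
  shows "sandwich d \<rho> f1 f2 f1 f2 =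
    (cnj \<alpha> * \<alpha>) \<cdot>\<^sub>m sandwich d \<rho> x y x y + (cnj \<alpha> * \<beta>) \<cdot>\<^sub>m sandwich d \<rho> x y (- cnj y) (cnj x)
    + (\<alpha> * cnj \<beta>) \<cdot>\<^sub>m sandwich d \<rho> (- cnj y) (cnj x) x y
    + (cnj \<beta> * \<beta>) \<cdot>\<^sub>m sandwich d \<rho> (- cnj y) (cnj x) (- cnj y) (cnj x)"
    (is "?L = ?R")
proof -
  have f: "f1 = \<alpha> * x + \<beta> * (- cnj y)" "f2 = \<alpha> * y + \<beta> * cnj x"
    unfolding \<alpha>_def \<beta>_def by (fact qubit_basis_coords[OF u])+
  have "?L = sandwich d \<rho> (\<alpha> * x + \<beta> * (- cnj y)) (\<alpha> * y + \<beta> * cnj x)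
      (\<alpha> * x + \<beta> * (- cnj y)) (\<alpha> * y + \<beta> * cnj x)"
    by (simp only: f[symmetric])
  also have "\<dots> = ?R"
    by (rule eq_matI) (auto simp: sandwich_index[OF rho] algebra_simps)
  finally show ?thesis .
qed

lemma sandwich_block_decomposition:
  assumes rho: "\<rho> \<in> carrier_mat (2 * d) (2 * d)" and u: "cnj x * x + cnj y * y = 1"
  defines "E \<equiv> ket_tensor_id d x y" and "F \<equiv> ket_tensor_id d (- cnj y) (cnj x)"
  shows "\<rho> = (E * sandwich d \<rho> x y x y * mat_adjoint E
      + F * sandwich d \<rho> (- cnj y) (cnj x) x y * mat_adjoint E)
    + (E * sandwich d \<rho> x y (- cnj y) (cnj x) * mat_adjoint F
       + F * sandwich d \<rho> (- cnj y) (cnj x) (- cnj y) (cnj x) * mat_adjoint F)"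
    (is "\<rho> = ?blocks")
proof -
  have "\<rho> = (E * mat_adjoint E + F * mat_adjoint F) * \<rho> * (E * mat_adjoint E + F * mat_adjoint F)"
    using ket_tensor_id_completeness[OF u, of d] rho unfolding E_def F_def by (simp add: mat_dim_simps)
  also have "\<dots> = ?blocks"
    using rho unfolding sandwich_def E_def F_def by (simp add: mat_dim_simps)
  finally show ?thesis .
qed

lemma outer_sum_expand:
  fixes E F A B :: "complex mat"
  assumes "E \<in> carrier_mat N d" "F \<in> carrier_mat N d" "A \<in> carrier_mat d 1" "B \<in> carrier_mat d 1"
  shows "(E * A + g \<cdot>\<^sub>m (F * B)) * mat_adjoint (E * A + g \<cdot>\<^sub>m (F * B)) =
    (E * (A * mat_adjoint A) * mat_adjoint E + F * (g \<cdot>\<^sub>m (B * mat_adjoint A)) * mat_adjoint E)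
    + (E * (cnj g \<cdot>\<^sub>m (A * mat_adjoint B)) * mat_adjoint F
       + F * ((cnj g * g) \<cdot>\<^sub>m (B * mat_adjoint B)) * mat_adjoint F)"
  using assms by (simp add: mat_adjoint_add mat_adjoint_smult mat_adjoint_mult mat_dim_simps smult_smult_mat)

section \<open>A vanishing diagonal block\<close>

lemma sandwich_cross_eq_0:
  assumes psd: "psd (2 * d) \<rho>" and z: "sandwich d \<rho> x y x y = 0\<^sub>m d d"
  shows "sandwich d \<rho> x' y' x y = 0\<^sub>m d d" "sandwich d \<rho> x y x' y' = 0\<^sub>m d d"
proof -
  have rho: "\<rho> \<in> carrier_mat (2 * d) (2 * d)" using psd_carrier[OF psd] .
  have "\<rho> * ket_tensor_id d x y = 0\<^sub>m (2 * d) d"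
    using z by (intro psd_mult_eq_0[OF psd]) (auto simp: sandwich_def)
  then show cross: "sandwich d \<rho> x' y' x y = 0\<^sub>m d d"
    using rho by (simp add: sandwich_def mat_dim_simps)
  have "sandwich d \<rho> x y x' y' = mat_adjoint (sandwich d \<rho> x' y' x y)"
    by (rule sandwich_swap[OF rho psd_hermitian[OF psd]])
  then show "sandwich d \<rho> x y x' y' = 0\<^sub>m d d" by (simp add: cross)
qed

lemma sandwich_eq_0_imp_perp_rank:
  assumes psd: "psd (2 * d) \<rho>" and u: "cnj x * x + cnj y * y = 1"
    and z: "sandwich d \<rho> x y x y = 0\<^sub>m d d"
  shows "mrank (sandwich d \<rho> (- cnj y) (cnj x) (- cnj y) (cnj x)) = mrank \<rho>"
proof -
  have rho: "\<rho> \<in> carrier_mat (2 * d) (2 * d)" using psd_carrier[OF psd] .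
  define F where "F = ket_tensor_id d (- cnj y) (cnj x)"
  define S where "S = sandwich d \<rho> (- cnj y) (cnj x) (- cnj y) (cnj x)"
  note decomposition = sandwich_block_decomposition[OF rho u, unfolded z sandwich_cross_eq_0[OF psd z]]
  have "\<rho> = F * S * mat_adjoint F"
    by (subst decomposition) (simp add: F_def S_def mat_dim_simps)
  then have "mrank \<rho> \<le> mrank S"
    using mrank_mult_mult_le[of F "2 * d" d S d "mat_adjoint F" "2 * d"] unfolding F_def S_def by simp
  moreover have "mrank S \<le> mrank \<rho>"
    using mrank_mult_mult_le[OF _ rho, of "mat_adjoint F" d F d] unfolding F_def S_def sandwich_def by simp
  ultimately show ?thesis by (simp add: S_def)
qed

lemma sandwich_eq_0_imp_multiple_of_perp:
  assumes psd: "psd (2 * d) \<rho>" and u: "cnj x * x + cnj y * y = 1"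
    and z: "sandwich d \<rho> x y x y = 0\<^sub>m d d"
  shows "sandwich d \<rho> f1 f2 f1 f2 =
    (cnj (- y * f1 + x * f2) * (- y * f1 + x * f2)) \<cdot>\<^sub>m sandwich d \<rho> (- cnj y) (cnj x) (- cnj y) (cnj x)"
  using sandwich_basis_expansion[OF psd_carrier[OF psd] u, of f1 f2] sandwich_cross_eq_0[OF psd z] z
  by simp

lemma assem_eq_0_imp:
  assumes psd: "psd (2 * d) \<rho>" and P: "rank_one_proj2 P" and z: "assem d \<rho> P = 0\<^sub>m d d"
  shows "mrank (assem d \<rho> (1\<^sub>m 2 - P)) = mrank \<rho>"
    and "rank_one_proj2 Q \<Longrightarrow> Q \<noteq> P \<Longrightarrow> \<exists>c. c \<noteq> 0 \<and> assem d \<rho> Q = c \<cdot>\<^sub>m assem d \<rho> (1\<^sub>m 2 - P)"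
proof -
  have rho: "\<rho> \<in> carrier_mat (2 * d) (2 * d)" using psd_carrier[OF psd] .
  obtain x y where u: "cnj x * x + cnj y * y = 1" and Pxy: "P = ketbra x y"
    using rank_one_proj2_ketbra[OF P] by blast
  have perp: "assem d \<rho> (1\<^sub>m 2 - P) = sandwich d \<rho> (- cnj y) (cnj x) (- cnj y) (cnj x)"
    unfolding Pxy ketbra_perp[OF u, symmetric] assem_ketbra[OF rho] ..
  have z': "sandwich d \<rho> x y x y = 0\<^sub>m d d" using z unfolding Pxy assem_ketbra[OF rho] .
  show "mrank (assem d \<rho> (1\<^sub>m 2 - P)) = mrank \<rho>"
    unfolding perp by (rule sandwich_eq_0_imp_perp_rank[OF psd u z'])
  assume "rank_one_proj2 Q" "Q \<noteq> P"
  then obtain f1 f2 where uf: "cnj f1 * f1 + cnj f2 * f2 = 1" and Qf: "Q = ketbra f1 f2"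
    and "ketbra f1 f2 \<noteq> ketbra x y"
    using rank_one_proj2_ketbra Pxy by blast
  define \<beta> where "\<beta> = - y * f1 + x * f2"
  have "\<beta> \<noteq> 0"
    using ketbra_eq_if_perp_coord_0[OF u uf] \<open>ketbra f1 f2 \<noteq> ketbra x y\<close> unfolding \<beta>_def by blast
  then have "cnj \<beta> * \<beta> \<noteq> 0" by simp
  then show "\<exists>c. c \<noteq> 0 \<and> assem d \<rho> Q = c \<cdot>\<^sub>m assem d \<rho> (1\<^sub>m 2 - P)"
    unfolding perp Qf assem_ketbra[OF rho] sandwich_eq_0_imp_multiple_of_perp[OF psd u z', of f1 f2]
      \<beta>_def[symmetric] by blast
qed

section \<open>Two rank-one diagonal blocks\<close>

text \<open>If \<open>|c| = 1\<close>, the four blocks combine to \<open>\<rho> = r r\<^sup>*\<close> with \<open>r = E A + c\<^sup>* F B\<close>.\<close>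

lemma rank_one_blocks_cross_coeff:
  assumes psd: "psd (2 * d) \<rho>" and r: "1 < mrank \<rho>" and u: "cnj x * x + cnj y * y = 1"
    and A: "A \<in> carrier_mat d 1" and B: "B \<in> carrier_mat d 1"
    and ee: "sandwich d \<rho> x y x y = A * mat_adjoint A"
    and ff: "sandwich d \<rho> (- cnj y) (cnj x) (- cnj y) (cnj x) = B * mat_adjoint B"
    and ef: "sandwich d \<rho> x y (- cnj y) (cnj x) = c \<cdot>\<^sub>m (A * mat_adjoint B)"
  shows "cnj c * c \<noteq> 1"
proof
  assume c: "cnj c * c = 1"
  have rho: "\<rho> \<in> carrier_mat (2 * d) (2 * d)" using psd_carrier[OF psd] .
  define E where "E = ket_tensor_id d x y"
  define F where "F = ket_tensor_id d (- cnj y) (cnj x)"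
  have E: "E \<in> carrier_mat (2 * d) d" and F: "F \<in> carrier_mat (2 * d) d" unfolding E_def F_def by auto
  have fe: "sandwich d \<rho> (- cnj y) (cnj x) x y = cnj c \<cdot>\<^sub>m (B * mat_adjoint A)"
    using sandwich_swap[OF rho psd_hermitian[OF psd], where x = x and y = y and x' = "- cnj y"
        and y' = "cnj x"] ef A B
    by (simp add: mat_adjoint_smult mat_adjoint_mult)
  define r where "r = E * A + cnj c \<cdot>\<^sub>m (F * B)"
  have "\<rho> = r * mat_adjoint r"
    unfolding r_def outer_sum_expand[OF E F A B]
    by (subst sandwich_block_decomposition[OF rho u])
      (use c in \<open>simp add: ee ef fe ff E_def F_def mult.commute\<close>)
  moreover have "r \<in> carrier_mat (2 * d) 1" using E F A B unfolding r_def by auto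
  ultimately have "mrank \<rho> \<le> 1" using mrank_mult_le_inner_dim by (metis mat_adjoint_carrier)
  with r show False by simp
qed

lemma sandwich_rank_one_expansion:
  assumes psd: "psd (2 * d) \<rho>" and r: "1 < mrank \<rho>" and u: "cnj x * x + cnj y * y = 1"
    and r0: "mrank (sandwich d \<rho> x y x y) = 1"
    and r1: "mrank (sandwich d \<rho> (- cnj y) (cnj x) (- cnj y) (cnj x)) = 1"
  obtains A B c where "A \<in> carrier_mat d 1" "B \<in> carrier_mat d 1" "A \<noteq> 0\<^sub>m d 1" "cnj c * c \<noteq> 1"
    "sandwich d \<rho> x y x y = A * mat_adjoint A"
    "\<And>f1 f2 \<alpha> \<beta>. \<alpha> = cnj x * f1 + cnj y * f2 \<Longrightarrow> \<beta> = - y * f1 + x * f2 \<Longrightarrow>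
      sandwich d \<rho> f1 f2 f1 f2 =
        (cnj \<alpha> * \<alpha>) \<cdot>\<^sub>m (A * mat_adjoint A) + (cnj \<alpha> * \<beta> * c) \<cdot>\<^sub>m (A * mat_adjoint B)
        + (\<alpha> * cnj \<beta> * cnj c) \<cdot>\<^sub>m (B * mat_adjoint A) + (cnj \<beta> * \<beta>) \<cdot>\<^sub>m (B * mat_adjoint B)"
proof -
  have rho: "\<rho> \<in> carrier_mat (2 * d) (2 * d)" using psd_carrier[OF psd] .
  obtain A where A: "A \<in> carrier_mat d 1" and ee: "sandwich d \<rho> x y x y = A * mat_adjoint A"
    using psd_rank_1_outer[OF sandwich_psd[OF psd] r0] by blast
  obtain B where B: "B \<in> carrier_mat d 1"
    and ff: "sandwich d \<rho> (- cnj y) (cnj x) (- cnj y) (cnj x) = B * mat_adjoint B"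
    using psd_rank_1_outer[OF sandwich_psd[OF psd] r1] by blast
  have A0: "A \<noteq> 0\<^sub>m d 1" using r0 ee A mrank_eq_0_iff[of "0\<^sub>m d d" d d] by auto
  have B0: "B \<noteq> 0\<^sub>m d 1" using r1 ff B mrank_eq_0_iff[of "0\<^sub>m d d" d d] by auto
  obtain c where ef: "sandwich d \<rho> x y (- cnj y) (cnj x) = c \<cdot>\<^sub>m (A * mat_adjoint B)"
    using psd_offdiag_block_outer[OF psd ket_tensor_id_carrier ket_tensor_id_carrier A A0 B B0
        ee[unfolded sandwich_def] ff[unfolded sandwich_def]]
    unfolding sandwich_def by blast
  have fe: "sandwich d \<rho> (- cnj y) (cnj x) x y = cnj c \<cdot>\<^sub>m (B * mat_adjoint A)"
    using sandwich_swap[OF rho psd_hermitian[OF psd], where x = x and y = y and x' = "- cnj y"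
        and y' = "cnj x"] ef A B
    by (simp add: mat_adjoint_smult mat_adjoint_mult)
  show thesis
  proof (rule that[OF A B A0 rank_one_blocks_cross_coeff[OF psd r u A B ee ff ef] ee])
    fix f1 f2 \<alpha> \<beta> assume "\<alpha> = cnj x * f1 + cnj y * f2" "\<beta> = - y * f1 + x * f2"
    then show "sandwich d \<rho> f1 f2 f1 f2 =
        (cnj \<alpha> * \<alpha>) \<cdot>\<^sub>m (A * mat_adjoint A) + (cnj \<alpha> * \<beta> * c) \<cdot>\<^sub>m (A * mat_adjoint B)
        + (\<alpha> * cnj \<beta> * cnj c) \<cdot>\<^sub>m (B * mat_adjoint A) + (cnj \<beta> * \<beta>) \<cdot>\<^sub>m (B * mat_adjoint B)"
      using sandwich_basis_expansion[OF rho u, of f1 f2] by (simp add: ee ff ef fe smult_smult_mat)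
  qed
qed

lemma sandwich_rank_one_pair:
  assumes psd: "psd (2 * d) \<rho>" and r: "1 < mrank \<rho>" and u: "cnj x * x + cnj y * y = 1"
    and r0: "mrank (sandwich d \<rho> x y x y) = 1"
    and r1: "mrank (sandwich d \<rho> (- cnj y) (cnj x) (- cnj y) (cnj x)) = 1"
  shows "(\<forall>f1 f2. cnj x * f1 + cnj y * f2 \<noteq> 0 \<longrightarrow> - y * f1 + x * f2 \<noteq> 0 \<longrightarrow>
            mrank (sandwich d \<rho> f1 f2 f1 f2) = 2)
    \<or> (\<forall>f1 f2. \<exists>\<mu>. sandwich d \<rho> f1 f2 f1 f2 = \<mu> \<cdot>\<^sub>m sandwich d \<rho> x y x y)"
proof -
  obtain A B c where A: "A \<in> carrier_mat d 1" and B: "B \<in> carrier_mat d 1" and A0: "A \<noteq> 0\<^sub>m d 1"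
    and c: "cnj c * c \<noteq> 1" and ee: "sandwich d \<rho> x y x y = A * mat_adjoint A"
    and expansion: "\<And>f1 f2 \<alpha> \<beta>. \<alpha> = cnj x * f1 + cnj y * f2 \<Longrightarrow> \<beta> = - y * f1 + x * f2 \<Longrightarrow>
      sandwich d \<rho> f1 f2 f1 f2 =
        (cnj \<alpha> * \<alpha>) \<cdot>\<^sub>m (A * mat_adjoint A) + (cnj \<alpha> * \<beta> * c) \<cdot>\<^sub>m (A * mat_adjoint B)
        + (\<alpha> * cnj \<beta> * cnj c) \<cdot>\<^sub>m (B * mat_adjoint A) + (cnj \<beta> * \<beta>) \<cdot>\<^sub>m (B * mat_adjoint B)"
    using sandwich_rank_one_expansion[OF psd r u r0 r1] by blast
  show ?thesis
  proof (cases "\<exists>k<d. \<exists>l<d. A $$ (k, 0) * B $$ (l, 0) \<noteq> A $$ (l, 0) * B $$ (k, 0)")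
    case True
    then obtain k l where kl: "k < d" "l < d"
      and indep: "A $$ (k, 0) * B $$ (l, 0) \<noteq> A $$ (l, 0) * B $$ (k, 0)" by blast
    have "mrank (sandwich d \<rho> f1 f2 f1 f2) = 2"
      if "cnj x * f1 + cnj y * f2 \<noteq> 0" "- y * f1 + x * f2 \<noteq> 0" for f1 f2
    proof -
      define \<alpha> where "\<alpha> = cnj x * f1 + cnj y * f2"
      define \<beta> where "\<beta> = - y * f1 + x * f2"
      have "\<alpha> \<noteq> 0" "\<beta> \<noteq> 0" using that unfolding \<alpha>_def \<beta>_def by simp_all
      then have "(cnj \<alpha> * \<alpha>) * (cnj \<beta> * \<beta>) * (1 - cnj c * c) \<noteq> 0" using c by simp
      then have "(cnj \<alpha> * \<alpha>) * (cnj \<beta> * \<beta>) \<noteq> (cnj \<alpha> * \<beta> * c) * (\<alpha> * cnj \<beta> * cnj c)"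
        by (simp add: algebra_simps)
      then show ?thesis
        unfolding expansion[OF \<alpha>_def \<beta>_def] by (rule mrank_outer_combination_eq_2[OF A B kl indep])
    qed
    then show ?thesis by blast
  next
    case False
    obtain k0 where k0: "k0 < d" "A $$ (k0, 0) \<noteq> 0" using col_vector_nonzero_entry[OF A A0] by blast
    define \<kappa> where "\<kappa> = B $$ (k0, 0) / A $$ (k0, 0)"
    have dep: "B $$ (i, 0) = \<kappa> * A $$ (i, 0)" if "i < d" for i
      using False that k0 unfolding \<kappa>_def by (auto simp: field_simps)
    have "\<exists>\<mu>. sandwich d \<rho> f1 f2 f1 f2 = \<mu> \<cdot>\<^sub>m sandwich d \<rho> x y x y" for f1 f2
      unfolding expansion[where ?f1.0 = f1 and ?f2.0 = f2, OF refl refl] ee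
      by (subst outer_combination_dependent[OF A B dep]) auto
    then show ?thesis by blast
  qed
qed

lemma assem_rank_one_pair:
  assumes psd: "psd (2 * d) \<rho>" and r: "1 < mrank \<rho>" and P: "rank_one_proj2 P"
    and r0: "mrank (assem d \<rho> P) = 1" and r1: "mrank (assem d \<rho> (1\<^sub>m 2 - P)) = 1"
  shows "(\<forall>Q. rank_one_proj2 Q \<longrightarrow> Q \<noteq> P \<longrightarrow> Q \<noteq> 1\<^sub>m 2 - P \<longrightarrow> mrank (assem d \<rho> Q) = 2)
    \<or> (\<forall>Q. rank_one_proj2 Q \<longrightarrow> (\<exists>\<mu>. assem d \<rho> Q = \<mu> \<cdot>\<^sub>m assem d \<rho> P))"
proof -
  have rho: "\<rho> \<in> carrier_mat (2 * d) (2 * d)" using psd_carrier[OF psd] .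
  obtain x y where u: "cnj x * x + cnj y * y = 1" and Pxy: "P = ketbra x y"
    using rank_one_proj2_ketbra[OF P] by blast
  have perp: "assem d \<rho> (1\<^sub>m 2 - P) = sandwich d \<rho> (- cnj y) (cnj x) (- cnj y) (cnj x)"
    unfolding Pxy ketbra_perp[OF u, symmetric] assem_ketbra[OF rho] ..
  have "mrank (sandwich d \<rho> x y x y) = 1"
    "mrank (sandwich d \<rho> (- cnj y) (cnj x) (- cnj y) (cnj x)) = 1"
    using r0 r1[unfolded perp] unfolding Pxy assem_ketbra[OF rho] by simp_all
  from sandwich_rank_one_pair[OF psd r u this] show ?thesis
  proof (elim disjE)
    assume rk2: "\<forall>f1 f2. cnj x * f1 + cnj y * f2 \<noteq> 0 \<longrightarrow> - y * f1 + x * f2 \<noteq> 0 \<longrightarrow>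
      mrank (sandwich d \<rho> f1 f2 f1 f2) = 2"
    have "mrank (assem d \<rho> Q) = 2" if Q: "rank_one_proj2 Q" "Q \<noteq> P" "Q \<noteq> 1\<^sub>m 2 - P" for Q
    proof -
      obtain f1 f2 where uf: "cnj f1 * f1 + cnj f2 * f2 = 1" and Qf: "Q = ketbra f1 f2"
        using rank_one_proj2_ketbra[OF Q(1)] by blast
      have "cnj x * f1 + cnj y * f2 \<noteq> 0" "- y * f1 + x * f2 \<noteq> 0"
        using Q(2,3) ketbra_eq_perp_if_coord_0[OF u uf] ketbra_eq_if_perp_coord_0[OF u uf]
        unfolding Qf Pxy ketbra_perp[OF u, symmetric] by blast+
      then show ?thesis using rk2 unfolding Qf assem_ketbra[OF rho] by blast
    qed
    then show ?thesis by blast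
  next
    assume "\<forall>f1 f2. \<exists>\<mu>. sandwich d \<rho> f1 f2 f1 f2 = \<mu> \<cdot>\<^sub>m sandwich d \<rho> x y x y"
    then have "\<exists>\<mu>. assem d \<rho> Q = \<mu> \<cdot>\<^sub>m assem d \<rho> P" if "rank_one_proj2 Q" for Q
      using rank_one_proj2_ketbra[OF that] unfolding Pxy by (auto simp: assem_ketbra[OF rho])
    then show ?thesis by blast
  qed
qed

section \<open>The assemblage of two measurements\<close>

lemma proportional_smult_smult:
  "c \<noteq> 0 \<Longrightarrow> c' \<noteq> 0 \<Longrightarrow> proportional (c \<cdot>\<^sub>m N) (c' \<cdot>\<^sub>m N)"
  unfolding proportional_def by (intro exI[of _ "c / c'"]) (auto intro!: eq_matI)

context
  fixes d :: nat and \<rho> :: "complex mat" and P :: "nat \<Rightarrow> nat \<Rightarrow> complex mat"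
  assumes psd: "psd (2 * d) \<rho>" and r2: "mrank \<rho> = 2"
    and proj: "\<And>a x. a < 2 \<Longrightarrow> x < 2 \<Longrightarrow> rank_one_proj2 (P a x)"
    and distinct: "\<And>a x a' x'. a < 2 \<Longrightarrow> x < 2 \<Longrightarrow> a' < 2 \<Longrightarrow> x' < 2 \<Longrightarrow> (a', x') \<noteq> (a, x) \<Longrightarrow>
      P a' x' \<noteq> P a x"
begin

lemma assemblage_zero_part:
  "\<forall>a<2. \<forall>x<2. assem d \<rho> (P a x) = 0\<^sub>m d d \<longrightarrow>
    (\<forall>a'<2. \<forall>x'<2. (a', x') \<noteq> (a, x) \<longrightarrow> mrank (assem d \<rho> (P a' x')) = 2) \<and>
    (\<forall>a'<2. \<forall>x'<2. \<forall>a''<2. \<forall>x''<2. (a', x') \<noteq> (a, x) \<longrightarrow> (a'', x'') \<noteq> (a, x) \<longrightarrow>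
      proportional (assem d \<rho> (P a' x')) (assem d \<rho> (P a'' x'')))"
proof (intro allI impI)
  fix a x :: nat assume ax: "a < 2" "x < 2" and z: "assem d \<rho> (P a x) = 0\<^sub>m d d"
  define N where "N = assem d \<rho> (1\<^sub>m 2 - P a x)"
  have N: "N \<in> carrier_mat d d" "mrank N = 2"
    using assem_eq_0_imp(1)[OF psd proj[OF ax] z] r2 unfolding N_def assem_def ptrace_A_def by auto
  have multiple: "\<exists>c. c \<noteq> 0 \<and> assem d \<rho> (P a' x') = c \<cdot>\<^sub>m N"
    if "a' < 2" "x' < 2" "(a', x') \<noteq> (a, x)" for a' x'
    using assem_eq_0_imp(2)[OF psd proj[OF ax] z proj distinct[OF ax]] that unfolding N_def by blast
  show "(\<forall>a'<2. \<forall>x'<2. (a', x') \<noteq> (a, x) \<longrightarrow> mrank (assem d \<rho> (P a' x')) = 2) \<and>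
    (\<forall>a'<2. \<forall>x'<2. \<forall>a''<2. \<forall>x''<2. (a', x') \<noteq> (a, x) \<longrightarrow> (a'', x'') \<noteq> (a, x) \<longrightarrow>
      proportional (assem d \<rho> (P a' x')) (assem d \<rho> (P a'' x'')))"
  proof (intro conjI allI impI)
    fix a' x' assume "a' < 2" "x' < 2" "(a', x') \<noteq> (a, x)"
    then obtain c where "c \<noteq> 0" "assem d \<rho> (P a' x') = c \<cdot>\<^sub>m N" using multiple by blast
    then show "mrank (assem d \<rho> (P a' x')) = 2" using mrank_smult[OF N(1)] N(2) by simp
  next
    fix a' x' a'' x''
    assume "a' < 2" "x' < 2" "a'' < 2" "x'' < 2" "(a', x') \<noteq> (a, x)" "(a'', x'') \<noteq> (a, x)"
    then obtain c c' where "c \<noteq> 0" "c' \<noteq> 0"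
      "assem d \<rho> (P a' x') = c \<cdot>\<^sub>m N" "assem d \<rho> (P a'' x'') = c' \<cdot>\<^sub>m N"
      using multiple by meson
    then show "proportional (assem d \<rho> (P a' x')) (assem d \<rho> (P a'' x''))"
      by (simp add: proportional_smult_smult)
  qed
qed

lemma assemblage_nonzero_if_rank_one:
  assumes a0x0: "a0 < 2" "x0 < 2" and r: "mrank (assem d \<rho> (P a0 x0)) = 1"
    and ax: "a < 2" "x < 2"
  shows "assem d \<rho> (P a x) \<noteq> 0\<^sub>m d d"
proof
  assume z: "assem d \<rho> (P a x) = 0\<^sub>m d d"
  show False
  proof (cases "(a0, x0) = (a, x)")
    case True
    then show False using z r mrank_eq_0_iff[of "0\<^sub>m d d" d d] by auto
  next
    case False
    then show False using assemblage_zero_part ax z a0x0 r by auto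
  qed
qed

lemma assemblage_rank_one_part:
  assumes compl: "\<And>x. x < 2 \<Longrightarrow> P 1 x = 1\<^sub>m 2 - P 0 x"
  shows "\<forall>x1<2. \<forall>x2<2. x1 \<noteq> x2 \<longrightarrow>
    mrank (assem d \<rho> (P 0 x1)) = 1 \<longrightarrow> mrank (assem d \<rho> (P 1 x1)) = 1 \<longrightarrow>
    (mrank (assem d \<rho> (P 0 x2)) = 2 \<and> mrank (assem d \<rho> (P 1 x2)) = 2) \<or>
    ((\<forall>a<2. \<forall>x<2. mrank (assem d \<rho> (P a x)) = 1) \<and>
     (\<forall>a<2. \<forall>x<2. \<forall>a'<2. \<forall>x'<2. proportional (assem d \<rho> (P a x)) (assem d \<rho> (P a' x'))))"
proof (intro allI impI)
  fix x1 x2 :: nat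
  assume x12: "x1 < 2" "x2 < 2" "x1 \<noteq> x2"
    and r0: "mrank (assem d \<rho> (P 0 x1)) = 1" and r1: "mrank (assem d \<rho> (P 1 x1)) = 1"
  define R0 where "R0 = assem d \<rho> (P 0 x1)"
  have R0: "R0 \<in> carrier_mat d d" unfolding R0_def assem_def ptrace_A_def by simp
  have "1 < mrank \<rho>" "rank_one_proj2 (P 0 x1)" using r2 proj x12 by simp_all
  from assem_rank_one_pair[OF psd this r0 r1[unfolded compl[OF x12(1)]]]
  show "(mrank (assem d \<rho> (P 0 x2)) = 2 \<and> mrank (assem d \<rho> (P 1 x2)) = 2) \<or>
    ((\<forall>a<2. \<forall>x<2. mrank (assem d \<rho> (P a x)) = 1) \<and>
     (\<forall>a<2. \<forall>x<2. \<forall>a'<2. \<forall>x'<2. proportional (assem d \<rho> (P a x)) (assem d \<rho> (P a' x'))))"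
  proof (elim disjE)
    assume "\<forall>Q. rank_one_proj2 Q \<longrightarrow> Q \<noteq> P 0 x1 \<longrightarrow> Q \<noteq> 1\<^sub>m 2 - P 0 x1 \<longrightarrow> mrank (assem d \<rho> Q) = 2"
    moreover have "P a x2 \<noteq> P 0 x1" "P a x2 \<noteq> 1\<^sub>m 2 - P 0 x1" if "a < 2" for a
      using distinct[of 0 x1 a x2] distinct[of 1 x1 a x2] that x12 compl[OF x12(1)] by auto
    ultimately show ?thesis using proj x12(2) by simp
  next
    assume "\<forall>Q. rank_one_proj2 Q \<longrightarrow> (\<exists>\<mu>. assem d \<rho> Q = \<mu> \<cdot>\<^sub>m assem d \<rho> (P 0 x1))"
    then have "\<forall>a x. \<exists>\<mu>. a < 2 \<longrightarrow> x < 2 \<longrightarrow> assem d \<rho> (P a x) = \<mu> \<cdot>\<^sub>m R0"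
      unfolding R0_def using proj by blast
    then obtain \<mu> where \<mu>: "\<And>a x. a < 2 \<Longrightarrow> x < 2 \<Longrightarrow> assem d \<rho> (P a x) = \<mu> a x \<cdot>\<^sub>m R0"
      by metis
    have \<mu>0: "\<mu> a x \<noteq> 0" if "a < 2" "x < 2" for a x
      using assemblage_nonzero_if_rank_one[OF _ x12(1) r0 that] \<mu>[OF that] R0
      by auto
    have "mrank (assem d \<rho> (P a x)) = 1" if "a < 2" "x < 2" for a x
      using \<mu>[OF that] \<mu>0[OF that] mrank_smult[OF R0] r0 unfolding R0_def by simp
    moreover have "proportional (assem d \<rho> (P a x)) (assem d \<rho> (P a' x'))"
      if "a < 2" "x < 2" "a' < 2" "x' < 2" for a x a' x'
      using \<mu> \<mu>0 that proportional_smult_smult by simp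
    ultimately show ?thesis by blast
  qed
qed

end

theorem lemma5:
  fixes d :: nat and \<rho> :: "complex mat" and P :: "nat \<Rightarrow> nat \<Rightarrow> complex mat"
  assumes state: "is_state (2*d) \<rho>"
    and rank2: "mrank \<rho> = 2"
    and meas0: "nontriv_pm (P 0 0) (P 1 0)"
    and meas1: "nontriv_pm (P 0 1) (P 1 1)"
    and diff: "P 0 0 \<noteq> P 0 1 \<and> P 0 0 \<noteq> P 1 1"
  defines "R \<equiv> (\<lambda>a x. assem d \<rho> (P a x))"
  shows
    "(\<forall>a<2. \<forall>x<2. R a x = 0\<^sub>m d d \<longrightarrow>
        (\<forall>a'<2. \<forall>x'<2. (a',x') \<noteq> (a,x) \<longrightarrow> mrank (R a' x') = 2) \<and>
        (\<forall>a'<2. \<forall>x'<2. \<forall>a''<2. \<forall>x''<2. (a',x') \<noteq> (a,x) \<longrightarrow> (a'',x'') \<noteq> (a,x) \<longrightarrow>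
            proportional (R a' x') (R a'' x'')))
   \<and> (\<forall>x1<2. \<forall>x2<2. x1 \<noteq> x2 \<longrightarrow> mrank (R 0 x1) = 1 \<longrightarrow> mrank (R 1 x1) = 1 \<longrightarrow>
        (mrank (R 0 x2) = 2 \<and> mrank (R 1 x2) = 2) \<or>
        ((\<forall>a<2. \<forall>x<2. mrank (R a x) = 1) \<and>
         (\<forall>a<2. \<forall>x<2. \<forall>a'<2. \<forall>x'<2. proportional (R a x) (R a' x'))))"
proof -
  have psd: "psd (2 * d) \<rho>" using state unfolding is_state_def by simp
  have meas: "nontriv_pm (P 0 x) (P 1 x)" if "x < 2" for x
    using that meas0 meas1 by (auto simp: less_2_cases_iff)
  have proj: "rank_one_proj2 (P a x)" if "a < 2" "x < 2" for a x
    using meas[OF that(2)] that(1) unfolding nontriv_pm_def by (auto simp: less_2_cases_iff)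
  have compl: "P 1 x = 1\<^sub>m 2 - P 0 x" if "x < 2" for x
    using nontriv_pm_complement(1)[OF meas[OF that]] .
  note distinct = measurements_distinct[OF meas0 meas1 diff]
  show ?thesis unfolding R_def
    using assemblage_zero_part[where P = P, OF psd rank2 proj distinct]
      assemblage_rank_one_part[where P = P, OF psd rank2 proj distinct compl]
    by (rule conjI)
qed

end
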